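(* Let $1<p<N$, let $(\delta_n)_{n\in\mathbb{N}}$ be a sequence of positive numbers with $\delta_n\to 0$, and let $(u_n)_{n\in\mathbb{N}}$ be a sequence of radially symmetric functions on $\mathbb{R}^N$ that are non-increasing in $|x|$. Assume that $(u_n)$ is bounded in $L^p(\mathbb{R}^N)$ and that $(I_{\delta_n}(u_n))_{n\in\mathbb{N}}$ is bounded. Then $(u_n)$ is pre-compact in $L^r(\mathbb{R}^N)$ for every $p<r<\frac{Np}{N-p}$.
   Context: For $\delta>0$ and measurable $u:\mathbb{R}^N\to\mathbb{R}$, $I_\delta(u):=\iint_{\{(x,y):\ |u(y)-u(x)|>\delta\}}\frac{\delta^p}{|x-y|^{N+p}}\,dx\,dy\in[0,+\infty]$. *)

theory Defs
  imports "HOL-Analysis.Analysis"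
begin

definition I_delta :: "real \<Rightarrow> real \<Rightarrow> ('a::euclidean_space \<Rightarrow> real) \<Rightarrow> ennreal" where
  "I_delta p \<delta> u =
     (\<integral>\<^sup>+ z. indicator {(x, y). \<bar>u y - u x\<bar> > \<delta>} z *
        ennreal (\<delta> powr p / norm (fst z - snd z) powr (real DIM('a) + p))
      \<partial>(lborel \<Otimes>\<^sub>M lborel))"

definition Lr_pow :: "real \<Rightarrow> ('a::euclidean_space \<Rightarrow> real) \<Rightarrow> ennreal" where
  "Lr_pow r f = (\<integral>\<^sup>+ x. ennreal (\<bar>f x\<bar> powr r) \<partial>lborel)"

definition precompact_Lr :: "real \<Rightarrow> (nat \<Rightarrow> 'a::euclidean_space \<Rightarrow> real) \<Rightarrow> bool" where
  "precompact_Lr r u \<longleftrightarrow>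
     (\<forall>n. u n \<in> borel_measurable lebesgue \<and> Lr_pow r (u n) < \<infinity>) \<and>
     (\<forall>s. strict_mono s \<longrightarrow>
        (\<exists>(t :: nat \<Rightarrow> nat) (g :: 'a \<Rightarrow> real). strict_mono t \<and> g \<in> borel_measurable lebesgue \<and> Lr_pow r g < \<infinity> \<and>
               ((\<lambda>k. Lr_pow r (\<lambda>x. u (s (t k)) x - g x)) \<longlongrightarrow> 0) sequentially))"

end

theory Submission
  imports Defs "HOL-Probability.Helly_Selection"
begin

text \<open>
  For a radial non-increasing \<open>u\<close>, every pair of points straddling a drop of \<open>u\<close> by more than
  \<open>\<delta>\<close> contributes to \<open>I\<^sub>\<delta>(u)\<close>. If \<open>u\<close> falls by \<open>3m\<delta>\<close> between radii \<open>a\<close> and \<open>2a\<close>, it has \<open>m\<close>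
  successive drops there, and the pairs straddling them give \<open>I\<^sub>\<delta>(u) \<ge> c (m\<delta>)\<^sup>p a\<^bsup>N-p\<^esup>\<close>
  (a convexity argument on the gaps between the drops). Hence the oscillation of \<open>u\<close> on
  \<open>[a, 2a]\<close> is at most \<open>6\<delta> + C a\<^bsup>-(N-p)/p\<^esup>\<close>; summing over dyadic scales bounds \<open>u\<close> near the
  origin by \<open>C |x|\<^bsup>-(N-p)/p\<^esup>\<close>, while the \<open>L\<^sup>p\<close> bound gives \<open>|u(x)| \<le> C |x|\<^bsup>-N/p\<^esup>\<close> far out.
  For \<open>p < r < Np/(N-p)\<close> this yields a common envelope in \<open>L\<^sup>r\<close>. Helly's selection theorem
  applied to the radial profiles gives an a.e. convergent subsequence, and dominated
  convergence turns it into convergence in \<open>L\<^sup>r\<close>.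
\<close>

lemma power_diff_ge:
  fixes a b c :: real
  assumes "0 \<le> a" "a \<le> c" "c \<le> b" "1 \<le> n"
  shows "a ^ (n - 1) * (b - c) \<le> b ^ n - c ^ n"
proof -
  obtain k where n: "n = Suc k" using assms(4) by (cases n) auto
  have "a ^ k \<le> c ^ k" "c ^ k \<le> b ^ k" using assms by (auto intro: power_mono)
  then have "a ^ k * (b - c) \<le> c ^ k * (b - c)" "b * c ^ k \<le> b * b ^ k"
    using assms by (auto intro: mult_right_mono mult_left_mono)
  then show ?thesis unfolding n by (simp add: algebra_simps)
qed

lemma power_powr_commute: "(y::real) > 0 \<Longrightarrow> (y ^ n) powr r = (y powr r) ^ n"
proof -
  assume y: "y > 0"
  have "(y ^ n) powr r = (y powr real n) powr r" using y by (simp add: powr_realpow)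
  also have "\<dots> = (y powr r) powr real n" by (simp add: powr_powr mult.commute)
  also have "\<dots> = (y powr r) ^ n" using y by (simp add: powr_realpow)
  finally show ?thesis .
qed

lemma powr_abs_diff_le:
  fixes a b r :: real
  assumes "r \<ge> 0"
  shows "\<bar>a - b\<bar> powr r \<le> 2 powr r * (\<bar>a\<bar> powr r + \<bar>b\<bar> powr r)"
proof -
  have "\<bar>a - b\<bar> powr r \<le> (2 * max \<bar>a\<bar> \<bar>b\<bar>) powr r"
    using assms by (intro powr_mono2) auto
  also have "\<dots> = 2 powr r * max \<bar>a\<bar> \<bar>b\<bar> powr r" by (simp add: powr_mult)
  also have "max \<bar>a\<bar> \<bar>b\<bar> powr r \<le> \<bar>a\<bar> powr r + \<bar>b\<bar> powr r" by (simp add: max_def)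
  finally show ?thesis by simp
qed

lemma card_gt_mult_le_sum:
  fixes s :: "nat \<Rightarrow> real"
  assumes "finite I" "\<And>i. i \<in> I \<Longrightarrow> s i \<ge> 0"
  shows "\<theta> * card {i\<in>I. \<theta> < s i} \<le> sum s I"
proof -
  have "\<theta> * card {i\<in>I. \<theta> < s i} = (\<Sum>i\<in>{i\<in>I. \<theta> < s i}. \<theta>)" by simp
  also have "\<dots> \<le> (\<Sum>i\<in>{i\<in>I. \<theta> < s i}. s i)" by (intro sum_mono) auto
  also have "\<dots> \<le> sum s I" using assms by (intro sum_mono2) auto
  finally show ?thesis .
qed

text \<open>By Markov's inequality at least half of the \<open>s i\<close> are at most \<open>2 L / n\<close>.\<close>
lemma sum_powr_ge_by_card:
  fixes s :: "nat \<Rightarrow> real" and I :: "nat set"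
  assumes fin: "finite I" and n: "card I = n" "n \<ge> 1" and spos: "\<And>i. i \<in> I \<Longrightarrow> s i > 0"
    and L: "sum s I \<le> L" and p: "p > 1"
  shows "real n powr p * (2 * L) powr (1 - p) / 2 \<le> (\<Sum>i\<in>I. s i powr (1 - p))"
proof -
  obtain i where "i \<in> I" using n by (metis card.empty not_one_le_zero ex_in_conv)
  then have "s i \<le> sum s I" using fin spos by (intro member_le_sum) (auto intro: less_imp_le)
  with spos[OF \<open>i \<in> I\<close>] L have "L > 0" by linarith
  define \<theta> where "\<theta> = 2 * L / n"
  have \<theta>: "\<theta> > 0" unfolding \<theta>_def using \<open>L > 0\<close> n by simp
  define G where "G = {i\<in>I. s i \<le> \<theta>}"
  have "\<theta> * card {i\<in>I. \<theta> < s i} \<le> L"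
    using card_gt_mult_le_sum[OF fin, of s \<theta>] spos L by fastforce
  then have "card {i\<in>I. \<theta> < s i} \<le> n / 2" unfolding \<theta>_def using n \<open>L > 0\<close> by (simp add: field_simps)
  moreover have "card G + card {i\<in>I. \<theta> < s i} = n"
  proof -
    have "G \<union> {i\<in>I. \<theta> < s i} = I" "G \<inter> {i\<in>I. \<theta> < s i} = {}" unfolding G_def by auto
    then show ?thesis using card_Un_disjoint[of G "{i\<in>I. \<theta> < s i}"] fin n unfolding G_def by simp
  qed
  ultimately have "n / 2 * \<theta> powr (1 - p) \<le> card G * \<theta> powr (1 - p)"
    by (intro mult_right_mono) auto
  also have "\<dots> = (\<Sum>i\<in>G. \<theta> powr (1 - p))" by simp
  also have "\<dots> \<le> (\<Sum>i\<in>G. s i powr (1 - p))"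
    using p spos by (intro sum_mono powr_mono2') (auto simp: G_def)
  also have "\<dots> \<le> (\<Sum>i\<in>I. s i powr (1 - p))" using fin by (intro sum_mono2) (auto simp: G_def)
  finally have "n / 2 * \<theta> powr (1 - p) \<le> (\<Sum>i\<in>I. s i powr (1 - p))" .
  moreover have "n / 2 * \<theta> powr (1 - p) = real n powr p * (2 * L) powr (1 - p) / 2"
  proof -
    have "\<theta> powr (1 - p) = (2 * L) powr (1 - p) / real n powr (1 - p)"
      unfolding \<theta>_def using \<open>L > 0\<close> n by (simp add: powr_divide)
    moreover have "real n / real n powr (1 - p) = real n powr p"
      using n by (simp add: powr_diff)
    ultimately show ?thesis by (metis times_divide_eq_left times_divide_eq_right)
  qed
  ultimately show ?thesis by simp
qed

section \<open>Helly selection for monotone, locally bounded sequences\<close>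

lemma mono_right_limit:
  fixes a :: "real \<Rightarrow> real"
  assumes mono: "mono a" and bdd: "\<And>x. \<bar>a x\<bar> \<le> B"
  defines "h \<equiv> \<lambda>x. Inf (a ` {x<..})"
  shows "mono h" and "continuous (at_right x) h" and "a x \<le> h x"
    and "y < x \<Longrightarrow> h y \<le> a x" and "\<bar>h x\<bar> \<le> B"
proof -
  have "- B \<le> a x" for x using bdd[of x] by (simp add: abs_le_iff)
  then have below: "bdd_below (a ` {x<..})" for x unfolding bdd_below_def by fast
  have le: "h y \<le> a x" if "y < x" for x y
    unfolding h_def using that by (intro cInf_lower below) auto
  then show "y < x \<Longrightarrow> h y \<le> a x" .
  have ge: "a x \<le> h x" for x
    unfolding h_def by (rule cInf_greatest) (auto intro: monoD[OF mono])
  then show "a x \<le> h x" .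
  show mono_h: "mono h"
    unfolding h_def mono_def by (auto intro!: cInf_superset_mono below)
  show "\<bar>h x\<bar> \<le> B"
    using ge[of x] le[of x "x + 1"] bdd[of x] bdd[of "x + 1"] by (auto simp: abs_le_iff)
  have "\<exists>d>0. h (x + d) - h x < \<epsilon>" if "\<epsilon> > 0" for \<epsilon>
  proof -
    obtain z where z: "x < z" "a z < h x + \<epsilon>"
      using cInf_lessD[of "a ` {x<..}" "h x + \<epsilon>"] \<open>\<epsilon> > 0\<close> unfolding h_def by auto
    have "h (x + (z - x) / 2) \<le> a z" using z by (intro le) (simp add: field_simps)
    then show ?thesis using z by (intro exI[of _ "(z - x) / 2"]) auto
  qed
  then show "continuous (at_right x) h"
    using continuous_at_right_real_increasing[of h x] monoD[OF mono_h] by blast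
qed

lemma tendsto_squeezed_by_right_limits:
  fixes a h :: "nat \<Rightarrow> real \<Rightarrow> real" and F :: "real \<Rightarrow> real"
  assumes ge: "\<And>n x. a n x \<le> h n x" and le: "\<And>n x y. y < x \<Longrightarrow> h n y \<le> a n x"
    and lim: "\<And>x. isCont F x \<Longrightarrow> (\<lambda>n. h n x) \<longlonglongrightarrow> F x" and "mono F" and cont: "isCont F x"
  shows "(\<lambda>n. a n x) \<longlonglongrightarrow> F x"
proof (rule order_tendstoI)
  fix c assume "c > F x"
  from order_tendstoD(2)[OF lim[OF cont] this] show "\<forall>\<^sub>F n in sequentially. a n x < c"
    by (rule eventually_mono) (use ge in \<open>rule le_less_trans\<close>)
next
  fix c assume "c < F x"
  moreover have "(F \<longlongrightarrow> F x) (at_left x)"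
    using cont by (simp add: isCont_def filterlim_at_split)
  ultimately have "\<forall>\<^sub>F y in at_left x. c < F y" by (rule order_tendstoD(1)[rotated])
  then obtain b where "b < x" and b: "\<And>y. b < y \<Longrightarrow> y < x \<Longrightarrow> c < F y"
    by (auto simp: eventually_at_left_field)
  text \<open>The discontinuities of \<open>F\<close> are countable, so \<open>F\<close> is continuous somewhere in \<open>(b, x)\<close>.\<close>
  moreover have "\<not> {b<..<x} \<subseteq> {y. \<not> isCont F y}"
    using \<open>b < x\<close> mono_ctble_discont[OF \<open>mono F\<close>] uncountable_open_interval countable_subset by metis
  ultimately obtain y where y: "y < x" "isCont F y" "c < F y" by fastforce
  from order_tendstoD(1)[OF lim[OF y(2)] y(3)] show "\<forall>\<^sub>F n in sequentially. c < a n x"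
    by (rule eventually_mono) (use le[OF y(1)] less_le_trans in blast)
qed

lemma convergent_if_arctan_tendsto:
  fixes f :: "nat \<Rightarrow> real"
  assumes lim: "(\<lambda>n. arctan (f n)) \<longlonglongrightarrow> L" and bdd: "\<And>n. \<bar>f n\<bar> \<le> M"
  shows "convergent f"
proof -
  have "\<bar>arctan (f n)\<bar> \<le> arctan \<bar>M\<bar>" for n
    using bdd[of n] arctan_monotone'[of "f n" "\<bar>M\<bar>"] arctan_monotone'[of "- f n" "\<bar>M\<bar>"]
    by (auto simp: abs_le_iff arctan_minus)
  then have "\<bar>L\<bar> \<le> arctan \<bar>M\<bar>" by (intro LIMSEQ_le_const2[OF tendsto_rabs[OF lim]]) auto
  then have "\<bar>L\<bar> < pi / 2" using arctan_bounded[of "\<bar>M\<bar>"] by linarith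
  then have "cos L \<noteq> 0" by (intro order.strict_implies_not_eq[symmetric] cos_gt_zero_pi) auto
  with lim have "(\<lambda>n. tan (arctan (f n))) \<longlonglongrightarrow> tan L"
    by (intro isCont_tendsto_compose[OF isCont_tan])
  then show ?thesis unfolding tan_arctan convergent_def by blast
qed

text \<open>Helly's selection theorem without right continuity and with a merely pointwise bound:
  arctan makes the sequence uniformly bounded, and replacing each function by its right limits
  makes it right continuous without changing the limit at continuity points.\<close>
lemma Helly_selection_off_countable:
  fixes f :: "nat \<Rightarrow> real \<Rightarrow> real" and M :: "real \<Rightarrow> real"
  assumes mono: "\<And>n. mono (f n)" and bdd: "\<And>n x. \<bar>f n x\<bar> \<le> M x"
  obtains s D where "strict_mono s" "countable D" "\<And>x. x \<notin> D \<Longrightarrow> convergent (\<lambda>n. f (s n) x)"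
proof -
  define a where "a n x = arctan (f n x)" for n x
  define h where "h n x = Inf (a n ` {x<..})" for n x
  have a_mono: "mono (a n)" for n
    unfolding a_def mono_def by (auto intro: arctan_monotone' monoD[OF mono])
  have a_bdd: "\<bar>a n x\<bar> \<le> pi / 2" for n x
    using arctan_bounded[of "f n x"] unfolding a_def by linarith
  note h = mono_right_limit[OF a_mono a_bdd, folded h_def]
  obtain s F where s: "strict_mono s" and "mono F"
    and F_lim: "\<And>x. isCont F x \<Longrightarrow> (\<lambda>n. h (s n) x) \<longlonglongrightarrow> F x"
    using Helly_selection[of h "pi / 2", OF h(2,1,5)] by blast
  have "convergent (\<lambda>n. f (s n) x)" if "isCont F x" for x
  proof (rule convergent_if_arctan_tendsto)
    show "(\<lambda>n. arctan (f (s n) x)) \<longlonglongrightarrow> F x"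
      using tendsto_squeezed_by_right_limits[OF h(3) h(4) F_lim \<open>mono F\<close> that] unfolding a_def .
  qed (rule bdd)
  moreover have "countable {x. \<not> isCont F x}" using \<open>mono F\<close> by (rule mono_ctble_discont)
  ultimately show ?thesis using s that by blast
qed

section \<open>Lower bounds for the nonlocal functional\<close>

lemma null_sets_sphere: "sphere (c::'a::euclidean_space) r \<in> null_sets lborel"
  using negligible_sphere[of c r]
  by (auto simp: null_sets_completion_iff negligible_iff_null_sets negligible_convex_frontier)

lemma emeasure_annulus:
  assumes "0 \<le> \<alpha>" "\<alpha> \<le> \<beta>"
  shows "emeasure lborel {x::'a::euclidean_space. \<alpha> < norm x \<and> norm x < \<beta>}
       = ennreal (unit_ball_vol DIM('a) * (\<beta> ^ DIM('a) - \<alpha> ^ DIM('a)))"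
proof (cases "\<alpha> = \<beta>")
  case False
  have "{x::'a. \<alpha> < norm x \<and> norm x < \<beta>} = ball 0 \<beta> - cball 0 \<alpha>" by auto
  moreover have "emeasure lborel (ball (0::'a) \<beta> - cball 0 \<alpha>)
      = emeasure lborel (ball (0::'a) \<beta>) - emeasure lborel (cball (0::'a) \<alpha>)"
    using False assms by (intro emeasure_Diff) (auto simp: emeasure_cball)
  ultimately show ?thesis
    using assms by (simp add: emeasure_cball emeasure_ball ennreal_minus[symmetric] right_diff_distrib power_mono)
next
  case True
  then have "{x::'a. \<alpha> < norm x \<and> norm x < \<beta>} = {}" by auto
  with True show ?thesis by (metis emeasure_empty diff_self mult_zero_right ennreal_0)
qed

definition kernel_const :: "real \<Rightarrow> 'a::euclidean_space itself \<Rightarrow> real" where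
  "kernel_const p _ = unit_ball_vol DIM('a) / (2 ^ DIM('a) * (5/2) powr (real DIM('a) + p))"

lemma kernel_const_pos: "kernel_const p TYPE('a::euclidean_space) > 0"
  unfolding kernel_const_def by (simp add: DIM_positive)

text \<open>A ball of radius \<open>D/2\<close> centred at distance \<open>2D\<close> from \<open>x\<close> lies within distance \<open>5D/2\<close> of \<open>x\<close>;
  the kernel bound there times the volume of the ball is where \<open>kernel_const\<close> comes from.\<close>
lemma kernel_integral_ge_ball:
  fixes x c :: "'a::euclidean_space"
  assumes D: "D > 0" and dist: "dist x c = 2 * D" and p: "p > 0" and sub: "ball c (D/2) \<subseteq> T"
  shows "ennreal (kernel_const p TYPE('a) * \<delta> powr p / D powr p)
     \<le> (\<integral>\<^sup>+ y. indicator T y * ennreal (\<delta> powr p / norm (x - y) powr (real DIM('a) + p)) \<partial>lborel)"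
proof -
  let ?N = "real DIM('a)"
  let ?K = "\<delta> powr p / (5 * D / 2) powr (?N + p)"
  have pt: "indicator (ball c (D/2)) y * ennreal ?K
        \<le> indicator T y * ennreal (\<delta> powr p / norm (x - y) powr (?N + p))" for y
  proof (cases "y \<in> ball c (D/2)")
    case True
    have "norm (x - y) \<le> dist x c + dist c y" by (metis dist_norm dist_triangle)
    also have "\<dots> \<le> 5 * D / 2" using True dist by (simp add: dist_commute)
    finally have le: "norm (x - y) \<le> 5 * D / 2" .
    have "dist x y \<ge> dist x c - dist c y" using dist_triangle[of x c y] by (simp add: dist_commute)
    moreover have "dist c y < D / 2" using True by simp
    ultimately have "dist x y > 0" using dist D by linarith
    then have "norm (x - y) > 0" by (simp add: dist_norm)
    then have "?K \<le> \<delta> powr p / norm (x - y) powr (?N + p)"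
      using le p D by (intro divide_left_mono mult_pos_pos powr_mono2) auto
    then show ?thesis using True sub by (auto intro: ennreal_leI)
  qed simp
  have "(\<integral>\<^sup>+ y. indicator (ball c (D/2)) y * ennreal ?K \<partial>lborel)
      = ennreal ?K * emeasure lborel (ball c (D/2))"
    by (subst mult.commute) (simp add: nn_integral_cmult_indicator)
  also have "\<dots> = ennreal ?K * ennreal (unit_ball_vol ?N * (D/2) ^ DIM('a))"
    using D by (simp add: emeasure_ball)
  also have "\<dots> = ennreal (?K * (unit_ball_vol ?N * (D/2) ^ DIM('a)))"
    by (rule ennreal_mult[symmetric]) (use D in auto)
  also have "?K * (unit_ball_vol ?N * (D/2) ^ DIM('a)) = kernel_const p TYPE('a) * \<delta> powr p / D powr p"
  proof -
    have "(5 * D / 2) powr (?N + p) = (5/2) powr (?N + p) * D powr (?N + p)"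
      using D powr_mult[of "5/2" D] by simp
    also have "D powr (?N + p) = D ^ DIM('a) * D powr p"
      using D by (simp add: powr_add powr_realpow)
    finally have "(5 * D / 2) powr (?N + p) = (5/2) powr (?N + p) * (D ^ DIM('a) * D powr p)" .
    then show ?thesis unfolding kernel_const_def using D by (simp add: field_simps power_divide)
  qed
  finally have "ennreal (kernel_const p TYPE('a) * \<delta> powr p / D powr p)
      = (\<integral>\<^sup>+ y. indicator (ball c (D/2)) y * ennreal ?K \<partial>lborel)" ..
  also have "\<dots> \<le> (\<integral>\<^sup>+ y. indicator T y * ennreal (\<delta> powr p / norm (x - y) powr (?N + p)) \<partial>lborel)"
    by (rule nn_integral_mono) (rule pt)
  finally show ?thesis .
qed

lemma kernel_integral_ge_outside:
  fixes x :: "'a::euclidean_space"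
  assumes x: "0 < norm x" "norm x < R" "R - norm x \<le> s" and p: "p > 0"
  shows "ennreal (kernel_const p TYPE('a) * \<delta> powr p / s powr p)
     \<le> (\<integral>\<^sup>+ y. indicator {y. R < norm y} y * ennreal (\<delta> powr p / norm (x - y) powr (real DIM('a) + p)) \<partial>lborel)"
proof -
  define D where "D = R - norm x"
  define c where "c = (1 + 2 * D / norm x) *\<^sub>R x"
  have D: "D > 0" using x unfolding D_def by simp
  have "x - c = (- (2 * D / norm x)) *\<^sub>R x" unfolding c_def by (simp add: algebra_simps)
  then have dist: "dist x c = 2 * D" using D x by (simp add: dist_norm)
  have "norm c = (1 + 2 * D / norm x) * norm x" unfolding c_def using D x by simp
  then have nc: "norm c = norm x + 2 * D" using x by (simp add: distrib_right)
  have "ball c (D/2) \<subseteq> {y. R < norm y}"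
  proof
    fix y assume "y \<in> ball c (D/2)"
    moreover have "norm c \<le> norm y + dist c y" using norm_triangle_ineq[of y "c - y"] by (simp add: dist_norm)
    ultimately show "y \<in> {y. R < norm y}" using nc D unfolding D_def by auto
  qed
  note ball = kernel_integral_ge_ball[OF D dist p this, of \<delta>]
  have "kernel_const p TYPE('a) * \<delta> powr p / s powr p \<le> kernel_const p TYPE('a) * \<delta> powr p / D powr p"
    using D x p kernel_const_pos[of p, where 'a='a]
    by (intro divide_left_mono mult_nonneg_nonneg mult_pos_pos powr_mono2) (auto simp: D_def)
  with ball show ?thesis by (blast intro: order_trans ennreal_leI)
qed

lemma kernel_integral_ge_inside:
  fixes x :: "'a::euclidean_space"
  assumes x: "0 \<le> r" "r < norm x" "norm x \<le> 2 * r" "norm x - r \<le> s" and p: "p > 0"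
  shows "ennreal (kernel_const p TYPE('a) * \<delta> powr p / s powr p)
     \<le> (\<integral>\<^sup>+ y. indicator {y. norm y < r} y * ennreal (\<delta> powr p / norm (x - y) powr (real DIM('a) + p)) \<partial>lborel)"
proof -
  define D where "D = norm x - r"
  define c where "c = (1 - 2 * D / norm x) *\<^sub>R x"
  have D: "D > 0" using x unfolding D_def by simp
  have nx: "norm x > 0" using x by linarith
  have "x - c = (2 * D / norm x) *\<^sub>R x" unfolding c_def by (simp add: algebra_simps)
  then have dist: "dist x c = 2 * D" using D nx by (simp add: dist_norm)
  have "1 - 2 * D / norm x = (2 * r - norm x) / norm x" using nx unfolding D_def by (simp add: field_simps)
  then have "norm c = (2 * r - norm x) / norm x * norm x" unfolding c_def using nx x by simp
  then have nc: "norm c = 2 * r - norm x" using nx by simp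
  have "ball c (D/2) \<subseteq> {y. norm y < r}"
  proof
    fix y assume "y \<in> ball c (D/2)"
    moreover have "norm y \<le> norm c + dist c y"
      using norm_triangle_ineq[of c "y - c"] by (simp add: dist_norm norm_minus_commute)
    ultimately show "y \<in> {y. norm y < r}" using nc D unfolding D_def by auto
  qed
  note ball = kernel_integral_ge_ball[OF D dist p this, of \<delta>]
  have "kernel_const p TYPE('a) * \<delta> powr p / s powr p \<le> kernel_const p TYPE('a) * \<delta> powr p / D powr p"
    using D x p kernel_const_pos[of p, where 'a='a]
    by (intro divide_left_mono mult_nonneg_nonneg mult_pos_pos powr_mono2) (auto simp: D_def)
  with ball show ?thesis by (blast intro: order_trans ennreal_leI)
qed

abbreviation frac_kernel :: "real \<Rightarrow> real \<Rightarrow> 'a::euclidean_space \<times> 'a \<Rightarrow> ennreal" where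
  "frac_kernel p \<delta> z \<equiv> ennreal (\<delta> powr p / norm (fst z - snd z) powr (real DIM('a) + p))"

lemma nn_integral_kernel_product_ge:
  fixes S T :: "'a::euclidean_space set"
  assumes [measurable]: "S \<in> sets borel" "T \<in> sets borel"
    and B: "\<And>x. x \<in> S \<Longrightarrow> ennreal B \<le> (\<integral>\<^sup>+ y. indicator T y * ennreal (\<delta> powr p / norm (x - y) powr (real DIM('a) + p)) \<partial>lborel)"
  shows "ennreal B * emeasure lborel S \<le> (\<integral>\<^sup>+ z. indicator (S \<times> T) z * frac_kernel p \<delta> z \<partial>(lborel \<Otimes>\<^sub>M lborel))"
proof -
  have "ennreal B * emeasure lborel S = (\<integral>\<^sup>+ x. indicator S x * ennreal B \<partial>lborel)"
    by (simp add: nn_integral_cmult_indicator mult.commute)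
  also have "\<dots> \<le> (\<integral>\<^sup>+ x. indicator S x * (\<integral>\<^sup>+ y. indicator T y * ennreal (\<delta> powr p / norm (x - y) powr (real DIM('a) + p)) \<partial>lborel) \<partial>lborel)"
  proof (rule nn_integral_mono)
    fix x show "indicator S x * ennreal B \<le> indicator S x * (\<integral>\<^sup>+ y. indicator T y * ennreal (\<delta> powr p / norm (x - y) powr (real DIM('a) + p)) \<partial>lborel)"
      by (cases "x \<in> S") (simp_all add: B)
  qed
  also have "\<dots> = (\<integral>\<^sup>+ x. \<integral>\<^sup>+ y. indicator (S \<times> T) (x, y) * frac_kernel p \<delta> (x, y) \<partial>lborel \<partial>lborel)"
    by (intro nn_integral_cong) (simp add: indicator_times mult.assoc nn_integral_cmult)
  also have "\<dots> = (\<integral>\<^sup>+ z. indicator (S \<times> T) z * frac_kernel p \<delta> z \<partial>(lborel \<Otimes>\<^sub>M lborel))"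
    by (rule lborel.nn_integral_fst) measurable
  finally show ?thesis .
qed

lemma I_delta_ge:
  fixes u :: "'a::euclidean_space \<Rightarrow> real"
  assumes "\<And>x y. (x, y) \<in> P \<Longrightarrow> \<delta> < \<bar>u y - u x\<bar>"
  shows "(\<integral>\<^sup>+ z. indicator P z * frac_kernel p \<delta> z \<partial>(lborel \<Otimes>\<^sub>M lborel)) \<le> I_delta p \<delta> u"
  unfolding I_delta_def by (intro nn_integral_mono) (auto simp: indicator_def assms)

lemma kernel_integral_annuli_outward_ge:
  assumes "0 \<le> \<alpha>" "\<alpha> \<le> \<beta>" "\<beta> \<le> \<gamma>" "p > 0"
  shows "ennreal (kernel_const p TYPE('a) * \<delta> powr p / (\<gamma> - \<alpha>) powr p * (unit_ball_vol DIM('a) * (\<beta> ^ DIM('a) - \<alpha> ^ DIM('a))))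
    \<le> (\<integral>\<^sup>+ z. indicator ({x::'a::euclidean_space. \<alpha> < norm x \<and> norm x < \<beta>} \<times> {y. \<gamma> < norm y}) z
            * frac_kernel p \<delta> z \<partial>(lborel \<Otimes>\<^sub>M lborel))"
proof -
  have "emeasure lborel {x::'a. \<alpha> < norm x \<and> norm x < \<beta>} = ennreal (unit_ball_vol DIM('a) * (\<beta> ^ DIM('a) - \<alpha> ^ DIM('a)))"
    using assms by (intro emeasure_annulus) auto
  moreover have "ennreal (kernel_const p TYPE('a) * \<delta> powr p / (\<gamma> - \<alpha>) powr p * (unit_ball_vol DIM('a) * (\<beta> ^ DIM('a) - \<alpha> ^ DIM('a))))
      = ennreal (kernel_const p TYPE('a) * \<delta> powr p / (\<gamma> - \<alpha>) powr p) * ennreal (unit_ball_vol DIM('a) * (\<beta> ^ DIM('a) - \<alpha> ^ DIM('a)))"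
    using kernel_const_pos[of p, where 'a='a] by (intro ennreal_mult') auto
  moreover have "ennreal (kernel_const p TYPE('a) * \<delta> powr p / (\<gamma> - \<alpha>) powr p) * emeasure lborel {x::'a. \<alpha> < norm x \<and> norm x < \<beta>}
    \<le> (\<integral>\<^sup>+ z. indicator ({x::'a. \<alpha> < norm x \<and> norm x < \<beta>} \<times> {y. \<gamma> < norm y}) z * frac_kernel p \<delta> z \<partial>(lborel \<Otimes>\<^sub>M lborel))"
    using assms by (intro nn_integral_kernel_product_ge kernel_integral_ge_outside) auto
  ultimately show ?thesis by simp
qed

lemma kernel_integral_annuli_inward_ge:
  assumes "0 \<le> \<alpha>" "\<alpha> \<le> \<beta>" "\<beta> \<le> \<gamma>" "\<gamma> \<le> 2 * \<alpha>" "p > 0"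
  shows "ennreal (kernel_const p TYPE('a) * \<delta> powr p / (\<gamma> - \<alpha>) powr p * (unit_ball_vol DIM('a) * (\<gamma> ^ DIM('a) - \<beta> ^ DIM('a))))
    \<le> (\<integral>\<^sup>+ z. indicator ({x::'a::euclidean_space. \<beta> < norm x \<and> norm x < \<gamma>} \<times> {y. norm y < \<alpha>}) z
            * frac_kernel p \<delta> z \<partial>(lborel \<Otimes>\<^sub>M lborel))"
proof -
  have "emeasure lborel {x::'a. \<beta> < norm x \<and> norm x < \<gamma>} = ennreal (unit_ball_vol DIM('a) * (\<gamma> ^ DIM('a) - \<beta> ^ DIM('a)))"
    using assms by (intro emeasure_annulus) auto
  moreover have "ennreal (kernel_const p TYPE('a) * \<delta> powr p / (\<gamma> - \<alpha>) powr p * (unit_ball_vol DIM('a) * (\<gamma> ^ DIM('a) - \<beta> ^ DIM('a))))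
      = ennreal (kernel_const p TYPE('a) * \<delta> powr p / (\<gamma> - \<alpha>) powr p) * ennreal (unit_ball_vol DIM('a) * (\<gamma> ^ DIM('a) - \<beta> ^ DIM('a)))"
    using kernel_const_pos[of p, where 'a='a] by (intro ennreal_mult') auto
  moreover have "ennreal (kernel_const p TYPE('a) * \<delta> powr p / (\<gamma> - \<alpha>) powr p) * emeasure lborel {x::'a. \<beta> < norm x \<and> norm x < \<gamma>}
    \<le> (\<integral>\<^sup>+ z. indicator ({x::'a. \<beta> < norm x \<and> norm x < \<gamma>} \<times> {y. norm y < \<alpha>}) z * frac_kernel p \<delta> z \<partial>(lborel \<Otimes>\<^sub>M lborel))"
    using assms by (intro nn_integral_kernel_product_ge kernel_integral_ge_inside) auto
  ultimately show ?thesis by simp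
qed

definition drop_pairs :: "real \<Rightarrow> real \<Rightarrow> real \<Rightarrow> ('a::euclidean_space \<times> 'a) set" where
  "drop_pairs \<alpha> \<beta> \<gamma> = {x. \<alpha> < norm x \<and> norm x < \<beta>} \<times> {y. \<gamma> < norm y} \<union> {x. \<beta> < norm x \<and> norm x < \<gamma>} \<times> {y. norm y < \<alpha>}"

lemma drop_pairs_measurable [measurable]: "drop_pairs \<alpha> \<beta> \<gamma> \<in> sets (lborel \<Otimes>\<^sub>M lborel)"
  unfolding drop_pairs_def by (intro sets.Un pair_measureI) auto

lemma drop_pairs_disjoint:
  assumes "\<alpha> \<le> \<beta>" "\<beta> \<le> \<gamma>" "\<alpha>' \<le> \<beta>'" "\<beta>' \<le> \<gamma>'" "\<beta> \<le> \<alpha>'" "\<gamma> \<le> \<beta>'"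
  shows "drop_pairs \<alpha> \<beta> \<gamma> \<inter> drop_pairs \<alpha>' \<beta>' \<gamma>' = {}"
  using assms unfolding drop_pairs_def by auto

lemma drop_pairs_jump:
  fixes u :: "'a::euclidean_space \<Rightarrow> real"
  assumes e: "norm e = 1" and nonincr: "\<And>x y. norm x \<le> norm y \<Longrightarrow> u y \<le> u x"
    and "0 \<le> \<alpha>" "\<alpha> \<le> \<beta>" "\<beta> \<le> \<gamma>"
    and drops: "u (\<beta> *\<^sub>R e) + \<delta> < u (\<alpha> *\<^sub>R e)" "u (\<gamma> *\<^sub>R e) + \<delta> < u (\<beta> *\<^sub>R e)"
    and xy: "(x, y) \<in> drop_pairs \<alpha> \<beta> \<gamma>"
  shows "\<delta> < \<bar>u y - u x\<bar>"
proof -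
  have norms: "norm (\<alpha> *\<^sub>R e) = \<alpha>" "norm (\<beta> *\<^sub>R e) = \<beta>" "norm (\<gamma> *\<^sub>R e) = \<gamma>"
    using assms by auto
  from xy consider "norm x \<le> \<beta>" "\<gamma> \<le> norm y" | "\<beta> \<le> norm x" "norm y \<le> \<alpha>"
    unfolding drop_pairs_def by fastforce
  then show ?thesis
  proof cases
    case 1
    then have "u (\<beta> *\<^sub>R e) \<le> u x" "u y \<le> u (\<gamma> *\<^sub>R e)" using norms by (auto intro: nonincr)
    then show ?thesis using drops by linarith
  next
    case 2
    then have "u x \<le> u (\<beta> *\<^sub>R e)" "u (\<alpha> *\<^sub>R e) \<le> u y" using norms by (auto intro: nonincr)
    then show ?thesis using drops by linarith
  qed
qed

lemma kernel_integral_drop_pairs_ge: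
  assumes "0 \<le> a" "a \<le> \<alpha>" "\<alpha> \<le> \<beta>" "\<beta> \<le> \<gamma>" "\<alpha> < \<gamma>" "\<gamma> \<le> 2 * \<alpha>" "p > 0"
  shows "ennreal (kernel_const p TYPE('a) * \<delta> powr p * unit_ball_vol DIM('a) * a ^ (DIM('a) - 1) * (\<gamma> - \<alpha>) powr (1 - p))
    \<le> (\<integral>\<^sup>+ z. indicator (drop_pairs \<alpha> \<beta> \<gamma> :: ('a::euclidean_space \<times> 'a) set) z * frac_kernel p \<delta> z \<partial>(lborel \<Otimes>\<^sub>M lborel))"
proof -
  let ?N = "DIM('a)" and ?c = "kernel_const p TYPE('a) * \<delta> powr p / (\<gamma> - \<alpha>) powr p * unit_ball_vol DIM('a)"
  define A :: "('a \<times> 'a) set" where "A = {x. \<alpha> < norm x \<and> norm x < \<beta>} \<times> {y. \<gamma> < norm y}"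
  define B :: "('a \<times> 'a) set" where "B = {x. \<beta> < norm x \<and> norm x < \<gamma>} \<times> {y. norm y < \<alpha>}"
  have [measurable]: "A \<in> sets (lborel \<Otimes>\<^sub>M lborel)" "B \<in> sets (lborel \<Otimes>\<^sub>M lborel)"
    unfolding A_def B_def by (auto intro!: pair_measureI)
  have c: "?c \<ge> 0" using kernel_const_pos[of p, where 'a='a] by simp
  have pows: "\<alpha> ^ ?N \<le> \<beta> ^ ?N" "\<beta> ^ ?N \<le> \<gamma> ^ ?N" using assms by (auto intro: power_mono)
  have "kernel_const p TYPE('a) * \<delta> powr p * unit_ball_vol ?N * a ^ (?N - 1) * (\<gamma> - \<alpha>) powr (1 - p)
      = ?c * (a ^ (?N - 1) * (\<gamma> - \<alpha>))"
    using assms by (simp add: powr_diff field_simps)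
  also have "\<dots> \<le> ?c * (\<gamma> ^ ?N - \<alpha> ^ ?N)"
    using assms c by (intro mult_left_mono power_diff_ge) (auto simp: DIM_positive Suc_leI)
  also have "\<dots> = ?c * (\<beta> ^ ?N - \<alpha> ^ ?N) + ?c * (\<gamma> ^ ?N - \<beta> ^ ?N)"
    by (simp only: distrib_left[symmetric]) simp
  finally have "ennreal (kernel_const p TYPE('a) * \<delta> powr p * unit_ball_vol ?N * a ^ (?N - 1) * (\<gamma> - \<alpha>) powr (1 - p))
      \<le> ennreal (?c * (\<beta> ^ ?N - \<alpha> ^ ?N) + ?c * (\<gamma> ^ ?N - \<beta> ^ ?N))"
    by (rule ennreal_leI)
  also have "\<dots> = ennreal (?c * (\<beta> ^ ?N - \<alpha> ^ ?N)) + ennreal (?c * (\<gamma> ^ ?N - \<beta> ^ ?N))"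
    using c pows by (intro ennreal_plus mult_nonneg_nonneg) (auto simp: less_imp_le[OF kernel_const_pos])
  also have "\<dots> \<le> (\<integral>\<^sup>+ z. indicator A z * frac_kernel p \<delta> z \<partial>(lborel \<Otimes>\<^sub>M lborel))
      + (\<integral>\<^sup>+ z. indicator B z * frac_kernel p \<delta> z \<partial>(lborel \<Otimes>\<^sub>M lborel))"
    unfolding A_def B_def using assms
    by (intro add_mono order_trans[OF _ kernel_integral_annuli_outward_ge] order_trans[OF _ kernel_integral_annuli_inward_ge])
      (auto simp: mult.assoc)
  also have "\<dots> = (\<integral>\<^sup>+ z. indicator (drop_pairs \<alpha> \<beta> \<gamma> :: ('a \<times> 'a) set) z * frac_kernel p \<delta> z \<partial>(lborel \<Otimes>\<^sub>M lborel))"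
  proof -
    have "A \<inter> B = {}" unfolding A_def B_def using assms by auto
    then have ind: "indicator (drop_pairs \<alpha> \<beta> \<gamma> :: ('a \<times> 'a) set) z = (indicator A z + indicator B z :: ennreal)" for z
      unfolding drop_pairs_def A_def B_def by (auto simp: indicator_def)
    have "(\<integral>\<^sup>+ z. indicator (drop_pairs \<alpha> \<beta> \<gamma> :: ('a \<times> 'a) set) z * frac_kernel p \<delta> z \<partial>(lborel \<Otimes>\<^sub>M lborel))
        = (\<integral>\<^sup>+ z. indicator A z * frac_kernel p \<delta> z + indicator B z * frac_kernel p \<delta> z \<partial>(lborel \<Otimes>\<^sub>M lborel))"
      by (intro nn_integral_cong) (simp add: ind distrib_right)
    also have "\<dots> = (\<integral>\<^sup>+ z. indicator A z * frac_kernel p \<delta> z \<partial>(lborel \<Otimes>\<^sub>M lborel))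
        + (\<integral>\<^sup>+ z. indicator B z * frac_kernel p \<delta> z \<partial>(lborel \<Otimes>\<^sub>M lborel))"
      by (rule nn_integral_add) measurable
    finally show ?thesis ..
  qed
  finally show ?thesis .
qed

lemma I_delta_ge_drop_chain:
  fixes u :: "'a::euclidean_space \<Rightarrow> real" and \<rho> :: "nat \<Rightarrow> real"
  assumes e: "norm e = 1" and nonincr: "\<And>x y. norm x \<le> norm y \<Longrightarrow> u y \<le> u x"
    and a: "a > 0" and p: "p > 0"
    and \<rho>: "strict_mono_on {..m} \<rho>" "a \<le> \<rho> 0" "\<rho> m \<le> 2 * a"
    and drop: "\<And>j. j < m \<Longrightarrow> u (\<rho> (Suc j) *\<^sub>R e) + \<delta> < u (\<rho> j *\<^sub>R e)"
  shows "ennreal (kernel_const p TYPE('a) * \<delta> powr p * unit_ball_vol DIM('a) * a ^ (DIM('a) - 1)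
      * (\<Sum>i\<in>{1..<m}. (\<rho> (Suc i) - \<rho> (i - 1)) powr (1 - p))) \<le> I_delta p \<delta> u"
proof -
  let ?c = "kernel_const p TYPE('a) * \<delta> powr p * unit_ball_vol DIM('a) * a ^ (DIM('a) - 1)"
  define P where "P i = (drop_pairs (\<rho> (i - 1)) (\<rho> i) (\<rho> (Suc i)) :: ('a \<times> 'a) set)" for i
  have le: "\<rho> i \<le> \<rho> j" if "i \<le> j" "j \<le> m" for i j
    using strict_mono_on_leD[OF \<rho>(1)] that by auto
  have lt: "\<rho> i < \<rho> j" if "i < j" "j \<le> m" for i j
    using strict_mono_onD[OF \<rho>(1)] that by auto
  have bounds: "a \<le> \<rho> i" "\<rho> i \<le> 2 * a" if "i \<le> m" for i
    using le[of 0 i] le[of i m] that \<rho> by auto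
  have "P i \<inter> P j = {}" if "i < j" "j < m" for i j
    unfolding P_def using that by (intro drop_pairs_disjoint le) auto
  then have disj: "disjoint_family_on P {1..<m}"
    unfolding disjoint_family_on_def by (metis Int_commute atLeastLessThan_iff linorder_neqE_nat)
  have c: "?c \<ge> 0" using kernel_const_pos[of p, where 'a='a] a by simp
  have "ennreal (?c * (\<Sum>i\<in>{1..<m}. (\<rho> (Suc i) - \<rho> (i - 1)) powr (1 - p)))
      = (\<Sum>i\<in>{1..<m}. ennreal (?c * (\<rho> (Suc i) - \<rho> (i - 1)) powr (1 - p)))"
    using c by (subst sum_ennreal) (auto simp: sum_distrib_left)
  also have "\<dots> \<le> (\<Sum>i\<in>{1..<m}. \<integral>\<^sup>+ z. indicator (P i) z * frac_kernel p \<delta> z \<partial>(lborel \<Otimes>\<^sub>M lborel))"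
  proof (intro sum_mono)
    fix i assume i: "i \<in> {1..<m}"
    then have "a \<le> \<rho> (i - 1)" "\<rho> (Suc i) \<le> 2 * a" by (auto intro: bounds)
    with i show "ennreal (?c * (\<rho> (Suc i) - \<rho> (i - 1)) powr (1 - p))
        \<le> (\<integral>\<^sup>+ z. indicator (P i) z * frac_kernel p \<delta> z \<partial>(lborel \<Otimes>\<^sub>M lborel))"
      unfolding P_def using a p by (intro kernel_integral_drop_pairs_ge le lt) auto
  qed
  also have "\<dots> = (\<integral>\<^sup>+ z. (\<Sum>i\<in>{1..<m}. indicator (P i) z * frac_kernel p \<delta> z) \<partial>(lborel \<Otimes>\<^sub>M lborel))"
    by (rule nn_integral_sum[symmetric]) (simp add: P_def)
  also have "\<dots> = (\<integral>\<^sup>+ z. indicator (\<Union>i\<in>{1..<m}. P i) z * frac_kernel p \<delta> z \<partial>(lborel \<Otimes>\<^sub>M lborel))"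
    unfolding indicator_UN_disjoint[OF finite_atLeastLessThan disj] sum_distrib_right ..
  also have "\<dots> \<le> I_delta p \<delta> u"
  proof (rule I_delta_ge)
    fix x y assume "(x, y) \<in> (\<Union>i\<in>{1..<m}. P i)"
    then obtain i where i: "i \<in> {1..<m}" "(x, y) \<in> P i" by auto
    moreover have "a \<le> \<rho> (i - 1)" using i by (auto intro: bounds)
    ultimately show "\<delta> < \<bar>u y - u x\<bar>"
      unfolding P_def using a drop[of "i - 1"] drop[of i]
      by (intro drop_pairs_jump[OF e nonincr]) (auto intro: le)
  qed
  finally show ?thesis .
qed

lemma I_delta_ge_single_drop:
  fixes u :: "'a::euclidean_space \<Rightarrow> real"
  assumes e: "norm e = 1" and nonincr: "\<And>x y. norm x \<le> norm y \<Longrightarrow> u y \<le> u x"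
    and p: "p > 0" and t: "a \<le> t" and w: "0 < w" "w \<le> a / 2"
    and drop: "u ((t + w) *\<^sub>R e) + \<delta> < u (t *\<^sub>R e)"
  shows "ennreal (kernel_const p TYPE('a) * \<delta> powr p * unit_ball_vol DIM('a) * (a / 2) ^ (DIM('a) - 1) / 2 powr p
      * w powr (1 - p)) \<le> I_delta p \<delta> u"
proof -
  let ?N = "DIM('a)" and ?k = "kernel_const p TYPE('a) * \<delta> powr p"
  have k: "?k \<ge> 0" using kernel_const_pos[of p, where 'a='a] by simp
  have "?k * unit_ball_vol ?N * (a / 2) ^ (?N - 1) / 2 powr p * w powr (1 - p)
      = ?k / (2 * w) powr p * (unit_ball_vol ?N * ((a / 2) ^ (?N - 1) * w))"
    using w by (simp add: powr_diff powr_mult field_simps)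
  also have "\<dots> \<le> ?k / (2 * w) powr p * (unit_ball_vol ?N * (t ^ ?N - (t - w) ^ ?N))"
  proof -
    have "(a / 2) ^ (?N - 1) * (t - (t - w)) \<le> t ^ ?N - (t - w) ^ ?N"
      using t w by (intro power_diff_ge) (auto simp: DIM_positive Suc_leI)
    then show ?thesis using k by (intro mult_left_mono) auto
  qed
  finally have "ennreal (?k * unit_ball_vol ?N * (a / 2) ^ (?N - 1) / 2 powr p * w powr (1 - p))
      \<le> ennreal (?k / ((t + w) - (t - w)) powr p * (unit_ball_vol ?N * (t ^ ?N - (t - w) ^ ?N)))"
    by (intro ennreal_leI) simp
  also have "\<dots> \<le> (\<integral>\<^sup>+ z. indicator ({x::'a. t - w < norm x \<and> norm x < t} \<times> {y. t + w < norm y}) z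
      * frac_kernel p \<delta> z \<partial>(lborel \<Otimes>\<^sub>M lborel))"
    using t w p by (intro kernel_integral_annuli_outward_ge) auto
  also have "\<dots> \<le> I_delta p \<delta> u"
  proof (rule I_delta_ge)
    fix x y :: 'a assume "(x, y) \<in> {x. t - w < norm x \<and> norm x < t} \<times> {y. t + w < norm y}"
    then have "u (t *\<^sub>R e) \<le> u x" "u y \<le> u ((t + w) *\<^sub>R e)"
      using e t w by (auto intro!: nonincr)
    then show "\<delta> < \<bar>u y - u x\<bar>" using drop by linarith
  qed
  finally show ?thesis .
qed

lemma drop_small_on_short_steps:
  fixes u :: "'a::euclidean_space \<Rightarrow> real"
  assumes e: "norm e = 1" and nonincr: "\<And>x y. norm x \<le> norm y \<Longrightarrow> u y \<le> u x"
    and a: "a > 0" and p: "p > 1" and \<delta>: "\<delta> > 0"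
    and I: "I_delta p \<delta> u \<le> ennreal C" and C: "C \<ge> 0"
  obtains g where "g > 0"
    "\<And>t w. a \<le> t \<Longrightarrow> 0 < w \<Longrightarrow> w \<le> a / 2 \<Longrightarrow> w < g \<Longrightarrow> u (t *\<^sub>R e) \<le> u ((t + w) *\<^sub>R e) + \<delta>"
proof
  define K where "K = kernel_const p TYPE('a) * \<delta> powr p * unit_ball_vol DIM('a) * (a / 2) ^ (DIM('a) - 1) / 2 powr p"
  have K: "K > 0" unfolding K_def using kernel_const_pos[of p, where 'a='a] \<delta> a by simp
  define g where "g = (K / (C + 1)) powr (1 / (p - 1))"
  show "g > 0" unfolding g_def using K C by simp
  fix t w assume t: "a \<le> t" and w: "0 < w" "w \<le> a / 2" "w < g"
  show "u (t *\<^sub>R e) \<le> u ((t + w) *\<^sub>R e) + \<delta>"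
  proof (rule ccontr)
    assume "\<not> ?thesis"
    then have "u ((t + w) *\<^sub>R e) + \<delta> < u (t *\<^sub>R e)" by simp
    with p have "ennreal (K * w powr (1 - p)) \<le> I_delta p \<delta> u"
      unfolding K_def by (intro I_delta_ge_single_drop[OF e nonincr _ t w(1,2)]) auto
    then have "ennreal (K * w powr (1 - p)) \<le> ennreal C" using I by (rule order_trans)
    then have le: "K * w powr (1 - p) \<le> C" using C by (simp add: ennreal_le_iff)
    have "w powr (p - 1) < g powr (p - 1)" using w p by (intro powr_less_mono2) auto
    also have "\<dots> = K / (C + 1)" unfolding g_def using K C p by (simp add: powr_powr)
    finally have "C + 1 < K / w powr (p - 1)" using K C w by (simp add: field_simps)
    also have "K / w powr (p - 1) = K * w powr (1 - p)"
      using powr_minus[of w "p - 1"] by (simp add: divide_inverse)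
    finally show False using le by simp
  qed
qed

section \<open>Oscillation on dyadic intervals\<close>

lemma strict_mono_on_if_drops:
  fixes u :: "'a::real_normed_vector \<Rightarrow> real"
  assumes e: "norm e = 1" and nonincr: "\<And>x y. norm x \<le> norm y \<Longrightarrow> u y \<le> u x"
    and drop: "\<And>j. j < m \<Longrightarrow> u (\<rho> (Suc j) *\<^sub>R e) + \<delta> < u (\<rho> j *\<^sub>R e)"
    and pos: "\<And>j. j \<le> m \<Longrightarrow> 0 \<le> \<rho> j" and \<delta>: "\<delta> \<ge> 0"
  shows "strict_mono_on {..m} \<rho>"
proof (rule strict_mono_onI)
  fix j k assume "j \<in> {..m}" "k \<in> {..m}" "j < k"
  then show "\<rho> j < \<rho> k"
  proof (induction k)
    case (Suc k)
    have "\<rho> k < \<rho> (Suc k)"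
    proof (rule ccontr)
      assume "\<not> \<rho> k < \<rho> (Suc k)"
      then have "norm (\<rho> (Suc k) *\<^sub>R e) \<le> norm (\<rho> k *\<^sub>R e)" using e pos Suc.prems by simp
      then have "u (\<rho> k *\<^sub>R e) \<le> u (\<rho> (Suc k) *\<^sub>R e)" by (rule nonincr)
      then show False using drop[of k] Suc.prems \<delta> by simp
    qed
    then show ?case using Suc by (cases "j = k") auto
  qed simp
qed

lemma grid_with_small_drops:
  fixes u :: "'a::real_normed_vector \<Rightarrow> real"
  assumes a: "a > 0" and g: "g > 0"
    and short: "\<And>t w. a \<le> t \<Longrightarrow> 0 < w \<Longrightarrow> w \<le> a / 2 \<Longrightarrow> w < g \<Longrightarrow> u (t *\<^sub>R e) \<le> u ((t + w) *\<^sub>R e) + \<delta>"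
  obtains \<tau> M where "\<tau> 0 = a" "\<tau> M = 2 * a" "\<And>i. a \<le> \<tau> i" "\<And>i. i \<le> M \<Longrightarrow> \<tau> i \<le> 2 * a"
    "\<And>i. u (\<tau> i *\<^sub>R e) \<le> u (\<tau> (Suc i) *\<^sub>R e) + \<delta>"
proof -
  define M where "M = nat \<lceil>a / g\<rceil> + 2"
  have M: "M \<ge> 2" "a / M < g" "a / M \<le> a / 2"
  proof -
    show "M \<ge> 2" unfolding M_def by simp
    have "a / g < M" unfolding M_def by linarith
    then show "a / M < g" using g \<open>M \<ge> 2\<close> by (simp add: field_simps)
    show "a / M \<le> a / 2" using \<open>M \<ge> 2\<close> a by (intro divide_left_mono) auto
  qed
  define \<tau> where "\<tau> i = a + real i * (a / M)" for i
  have ends: "\<tau> 0 = a" "\<tau> M = 2 * a" unfolding \<tau>_def using M by simp_all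
  have \<tau>a: "a \<le> \<tau> i" for i unfolding \<tau>_def using a by simp
  have \<tau>le: "\<tau> i \<le> 2 * a" if "i \<le> M" for i
  proof -
    have "real i * (a / M) \<le> real M * (a / M)" using that a by (intro mult_right_mono) auto
    then show ?thesis unfolding \<tau>_def using M by simp
  qed
  have step: "u (\<tau> i *\<^sub>R e) \<le> u (\<tau> (Suc i) *\<^sub>R e) + \<delta>" for i
  proof -
    have "\<tau> (Suc i) = \<tau> i + a / M" unfolding \<tau>_def by (simp add: distrib_right add_divide_distrib)
    then show ?thesis using short[OF \<tau>a _ M(3,2)] a M by simp
  qed
  from ends \<tau>a \<tau>le step show thesis by (rule that)
qed

lemma drop_chain_exists:
  fixes u :: "'a::euclidean_space \<Rightarrow> real"
  assumes e: "norm e = 1" and nonincr: "\<And>x y. norm x \<le> norm y \<Longrightarrow> u y \<le> u x"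
    and a: "a > 0" and \<delta>: "\<delta> > 0" and g: "g > 0"
    and short: "\<And>t w. a \<le> t \<Longrightarrow> 0 < w \<Longrightarrow> w \<le> a / 2 \<Longrightarrow> w < g \<Longrightarrow> u (t *\<^sub>R e) \<le> u ((t + w) *\<^sub>R e) + \<delta>"
    and big: "3 * real m * \<delta> < u (a *\<^sub>R e) - u ((2 * a) *\<^sub>R e)"
  obtains \<rho> where "strict_mono_on {..m} \<rho>" "a \<le> \<rho> 0" "\<rho> m \<le> 2 * a"
    "\<And>j. j < m \<Longrightarrow> u (\<rho> (Suc j) *\<^sub>R e) + \<delta> < u (\<rho> j *\<^sub>R e)"
proof -
  obtain M \<tau> where \<tau>: "\<tau> 0 = a" "\<tau> M = 2 * a" "\<And>i. a \<le> \<tau> i" "\<And>i. i \<le> M \<Longrightarrow> \<tau> i \<le> 2 * a"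
    and step: "\<And>i. u (\<tau> i *\<^sub>R e) \<le> u (\<tau> (Suc i) *\<^sub>R e) + \<delta>"
    using grid_with_small_drops[where u=u and e=e and \<delta>=\<delta>, OF a g short] by blast
  text \<open>\<open>\<rho> j\<close> is the first grid point where \<open>u\<close> has fallen below \<open>u (a e) - 3j\<delta>\<close>; since each
    grid step loses at most \<open>\<delta>\<close>, consecutive levels are crossed with a drop of more than \<open>\<delta>\<close>.\<close>
  define L where "L j = u (a *\<^sub>R e) - 3 * real j * \<delta>" for j
  define i where "i j = (LEAST k. u (\<tau> k *\<^sub>R e) < L j)" for j
  have reach: "u (\<tau> M *\<^sub>R e) < L j" if "j \<le> m" for j
  proof -
    have "3 * real j * \<delta> \<le> 3 * real m * \<delta>" using that \<delta> by simp
    then show ?thesis unfolding L_def \<tau>(2) using big by simp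
  qed
  have i: "i j \<le> M" "u (\<tau> (i j) *\<^sub>R e) < L j" "L j - \<delta> \<le> u (\<tau> (i j) *\<^sub>R e)" if j: "j \<le> m" for j
  proof -
    show "i j \<le> M" unfolding i_def by (rule Least_le) (rule reach[OF j])
    show lt: "u (\<tau> (i j) *\<^sub>R e) < L j" unfolding i_def by (rule LeastI) (rule reach[OF j])
    have "\<not> u (\<tau> 0 *\<^sub>R e) < L j" unfolding \<tau>(1) L_def using \<delta> by (simp add: not_less)
    with lt obtain k where k: "i j = Suc k" by (cases "i j") auto
    then have "\<not> u (\<tau> k *\<^sub>R e) < L j" unfolding i_def by (metis Suc_n_not_le_n Least_le not_le_imp_less)
    then show "L j - \<delta> \<le> u (\<tau> (i j) *\<^sub>R e)" using step[of k] k by simp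
  qed
  define \<rho> where "\<rho> j = \<tau> (i j)" for j
  have drop: "u (\<rho> (Suc j) *\<^sub>R e) + \<delta> < u (\<rho> j *\<^sub>R e)" if "j < m" for j
    using i(2)[of "Suc j"] i(3)[of j] that \<delta> unfolding \<rho>_def L_def by (simp add: algebra_simps)
  have "strict_mono_on {..m} \<rho>"
    using e nonincr drop
  proof (rule strict_mono_on_if_drops)
    show "0 \<le> \<rho> j" for j unfolding \<rho>_def using a \<tau>(3)[of "i j"] by simp
    show "0 \<le> \<delta>" using \<open>\<delta> > 0\<close> by simp
  qed
  moreover have "a \<le> \<rho> 0" "\<rho> m \<le> 2 * a" unfolding \<rho>_def by (auto intro: \<tau>(3) \<tau>(4) i(1))
  ultimately show ?thesis using that drop by blast
qed

lemma chain_gaps_powr_sum_ge: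
  fixes \<rho> :: "nat \<Rightarrow> real"
  assumes \<rho>: "strict_mono_on {..m} \<rho>" "\<rho> m - \<rho> 0 \<le> L" and m: "m \<ge> 2" and p: "p > 1"
  shows "real (m - 1) powr p * (4 * L) powr (1 - p) / 2 \<le> (\<Sum>i\<in>{1..<m}. (\<rho> (Suc i) - \<rho> (i - 1)) powr (1 - p))"
proof -
  have le: "\<rho> i \<le> \<rho> j" if "i \<le> j" "j \<le> m" for i j
    using strict_mono_on_leD[OF \<rho>(1)] that by auto
  have "(\<Sum>i\<in>{1..<m}. \<rho> (Suc i) - \<rho> (i - 1))
      = (\<Sum>i\<in>{1..<m}. \<rho> (Suc i) - \<rho> i) + (\<Sum>i\<in>{Suc 0..<Suc (m - 1)}. \<rho> i - \<rho> (i - 1))"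
    using m by (simp add: sum.distrib[symmetric])
  also have "\<dots> = (\<rho> m - \<rho> 1) + (\<rho> (m - 1) - \<rho> 0)"
    unfolding sum.shift_bounds_Suc_ivl using m by (simp add: sum_Suc_diff')
  also have "\<dots> \<le> 2 * L" using le[of 0 1] le[of "m - 1" m] m \<rho> by simp
  finally have "(\<Sum>i\<in>{1..<m}. \<rho> (Suc i) - \<rho> (i - 1)) \<le> 2 * L" .
  moreover have "\<rho> (Suc i) - \<rho> (i - 1) > 0" if "i \<in> {1..<m}" for i
    using strict_mono_onD[OF \<rho>(1), of "i - 1" "Suc i"] that by auto
  ultimately have "real (m - 1) powr p * (2 * (2 * L)) powr (1 - p) / 2
      \<le> (\<Sum>i\<in>{1..<m}. (\<rho> (Suc i) - \<rho> (i - 1)) powr (1 - p))"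
    using m p by (intro sum_powr_ge_by_card) auto
  then show ?thesis by simp
qed

lemma drop_chain_length_le:
  fixes u :: "'a::euclidean_space \<Rightarrow> real"
  assumes e: "norm e = 1" and nonincr: "\<And>x y. norm x \<le> norm y \<Longrightarrow> u y \<le> u x"
    and a: "a > 0" and p: "p > 1" and \<delta>: "\<delta> > 0"
    and I: "I_delta p \<delta> u \<le> ennreal C" and C: "C \<ge> 0"
    and \<rho>: "strict_mono_on {..m} \<rho>" "a \<le> \<rho> 0" "\<rho> m \<le> 2 * a"
    and drop: "\<And>j. j < m \<Longrightarrow> u (\<rho> (Suc j) *\<^sub>R e) + \<delta> < u (\<rho> j *\<^sub>R e)"
  shows "(real m - 1) * \<delta>
    \<le> (2 * 4 powr (p - 1) * C / (kernel_const p TYPE('a) * unit_ball_vol DIM('a)) * a powr (p - DIM('a))) powr (1 / p)"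
proof (cases "m \<ge> 2")
  case False
  then have "(real m - 1) * \<delta> \<le> 0" using \<delta> by (intro mult_nonpos_nonneg) auto
  then show ?thesis by (rule order_trans) simp
next
  case m: True
  let ?N = "real DIM('a)" and ?s = "\<lambda>i. \<rho> (Suc i) - \<rho> (i - 1)"
  define Q where "Q = 2 * 4 powr (p - 1) * C / (kernel_const p TYPE('a) * unit_ball_vol DIM('a))"
  define Y where "Y = kernel_const p TYPE('a) * \<delta> powr p * unit_ball_vol DIM('a) * a ^ (DIM('a) - 1)"
  have Y: "Y > 0" unfolding Y_def using kernel_const_pos[of p, where 'a='a] \<delta> a by simp
  have "ennreal (Y * (\<Sum>i\<in>{1..<m}. ?s i powr (1 - p))) \<le> ennreal C"
    unfolding Y_def using p by (intro order_trans[OF I_delta_ge_drop_chain[OF e nonincr a _ \<rho> drop] I]) auto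
  then have chain: "Y * (\<Sum>i\<in>{1..<m}. ?s i powr (1 - p)) \<le> C" using C by (simp add: ennreal_le_iff)
  have "real (m - 1) powr p * (4 * a) powr (1 - p) / 2 \<le> (\<Sum>i\<in>{1..<m}. ?s i powr (1 - p))"
    using \<rho> m p by (intro chain_gaps_powr_sum_ge) auto
  then have "real (m - 1) powr p * (4 * a) powr (1 - p) / 2 * Y \<le> (\<Sum>i\<in>{1..<m}. ?s i powr (1 - p)) * Y"
    using Y by (intro mult_right_mono) auto
  also have "\<dots> \<le> C" using chain by (simp add: mult.commute)
  finally have "real (m - 1) powr p * (4 * a) powr (1 - p) / 2 * Y \<le> C" .
  then have "real (m - 1) powr p * \<delta> powr p \<le> Q * a powr (p - ?N)"
  proof -
    let ?kw = "kernel_const p TYPE('a) * unit_ball_vol ?N"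
    define Z where "Z = (4 * a) powr (1 - p) * ?kw * a ^ (DIM('a) - 1) / 2"
    assume "real (m - 1) powr p * (4 * a) powr (1 - p) / 2 * Y \<le> C"
    then have "real (m - 1) powr p * \<delta> powr p * Z \<le> C"
      unfolding Y_def Z_def by (simp add: ac_simps)
    moreover have kw: "?kw > 0" using kernel_const_pos[of p, where 'a='a] by simp
    then have Z: "Z > 0" unfolding Z_def using a by simp
    ultimately have "real (m - 1) powr p * \<delta> powr p \<le> C / Z" by (simp add: pos_le_divide_eq)
    also have "Z = ?kw / (2 * 4 powr (p - 1)) / a powr (p - ?N)"
    proof -
      have "a ^ (DIM('a) - 1) = a powr (?N - 1)"
        using a by (simp add: powr_realpow[symmetric] of_nat_diff DIM_positive Suc_leI)
      moreover have "(4 * a) powr (1 - p) = 4 powr (1 - p) * a powr (1 - p)"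
        using a by (simp add: powr_mult)
      ultimately have "(4 * a) powr (1 - p) * a ^ (DIM('a) - 1) = 4 powr (1 - p) * a powr (1 - p + (?N - 1))"
        by (simp only: powr_add mult.assoc)
      also have "\<dots> = 1 / 4 powr (p - 1) / a powr (p - ?N)"
        using powr_minus[of 4 "p - 1"] powr_minus[of a "p - ?N"] by (simp add: divide_inverse)
      finally show ?thesis unfolding Z_def by (simp add: field_simps)
    qed
    also have "C / (?kw / (2 * 4 powr (p - 1)) / a powr (p - ?N)) = Q * a powr (p - ?N)"
      unfolding Q_def using kw by simp
    finally show ?thesis .
  qed
  then have "((real (m - 1) * \<delta>) powr p) powr (1 / p) \<le> (Q * a powr (p - ?N)) powr (1 / p)"
    using p \<delta> by (intro powr_mono2) (auto simp: powr_mult)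
  then show ?thesis using p \<delta> m unfolding Q_def by (simp add: powr_powr of_nat_diff)
qed

lemma drop_on_dyadic_interval_le:
  fixes u :: "'a::euclidean_space \<Rightarrow> real"
  assumes e: "norm e = 1" and nonincr: "\<And>x y. norm x \<le> norm y \<Longrightarrow> u y \<le> u x"
    and a: "a > 0" and p: "p > 1" and \<delta>: "\<delta> > 0"
    and I: "I_delta p \<delta> u \<le> ennreal C" and C: "C \<ge> 0"
  shows "u (a *\<^sub>R e) - u ((2 * a) *\<^sub>R e)
    \<le> 6 * \<delta> + 3 * (2 * 4 powr (p - 1) * C / (kernel_const p TYPE('a) * unit_ball_vol DIM('a)) * a powr (p - DIM('a))) powr (1 / p)"
    (is "?D \<le> 6 * \<delta> + 3 * ?R")
proof (cases "?D \<le> 6 * \<delta>")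
  case False
  define m where "m = nat \<lceil>?D / (3 * \<delta>)\<rceil> - 1"
  have m: "3 * real m * \<delta> < ?D" "?D \<le> 3 * (real m + 1) * \<delta>"
  proof -
    have "?D / (3 * \<delta>) > 2" using False \<delta> by (simp add: field_simps)
    then have "real m < ?D / (3 * \<delta>)" "?D / (3 * \<delta>) \<le> real m + 1"
      unfolding m_def by (simp_all add: of_nat_diff) linarith+
    then show "3 * real m * \<delta> < ?D" "?D \<le> 3 * (real m + 1) * \<delta>"
      using \<delta> by (simp_all add: field_simps)
  qed
  obtain g where "g > 0" and short:
    "\<And>t w. a \<le> t \<Longrightarrow> 0 < w \<Longrightarrow> w \<le> a / 2 \<Longrightarrow> w < g \<Longrightarrow> u (t *\<^sub>R e) \<le> u ((t + w) *\<^sub>R e) + \<delta>"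
    using drop_small_on_short_steps[OF e nonincr a p \<delta> I C] by blast
  obtain \<rho> where "strict_mono_on {..m} \<rho>" "a \<le> \<rho> 0" "\<rho> m \<le> 2 * a"
    "\<And>j. j < m \<Longrightarrow> u (\<rho> (Suc j) *\<^sub>R e) + \<delta> < u (\<rho> j *\<^sub>R e)"
    using drop_chain_exists[OF e nonincr a \<delta> \<open>g > 0\<close> short m(1)] by blast
  then have "(real m - 1) * \<delta> \<le> ?R"
    by (intro drop_chain_length_le[OF e nonincr a p \<delta> I C])
  with m(2) show ?thesis by (simp add: algebra_simps)
qed (auto intro: add_increasing2)

section \<open>Pointwise bounds and an integrable envelope\<close>

lemma Lr_pow_ge_on_set:
  fixes u :: "'a::euclidean_space \<Rightarrow> real"
  assumes S: "S \<in> sets borel" and c: "c \<ge> 0" and le: "\<And>y. y \<in> S \<Longrightarrow> c \<le> \<bar>u y\<bar>" and r: "r > 0"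
  shows "ennreal (c powr r) * emeasure lborel S \<le> Lr_pow r u"
proof -
  have "ennreal (c powr r) * emeasure lborel S = (\<integral>\<^sup>+ y. ennreal (c powr r) * indicator S y \<partial>lborel)"
    using S by (simp add: nn_integral_cmult_indicator)
  also have "\<dots> \<le> Lr_pow r u" unfolding Lr_pow_def
  proof (intro nn_integral_mono)
    fix y show "ennreal (c powr r) * indicator S y \<le> ennreal (\<bar>u y\<bar> powr r)"
      using le[of y] c r by (cases "y \<in> S") (auto intro!: ennreal_leI powr_mono2)
  qed
  finally show ?thesis .
qed

lemma nonneg_if_Lr_pow_bounded:
  fixes u :: "'a::euclidean_space \<Rightarrow> real"
  assumes nonincr: "\<And>x y. norm x \<le> norm y \<Longrightarrow> u y \<le> u x"
    and Lp: "Lr_pow p u \<le> ennreal CL" and p: "p > 0"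
  shows "u x \<ge> 0"
proof (rule ccontr)
  assume "\<not> u x \<ge> 0"
  then have c: "- u x > 0" by simp
  define T where "T = max (norm x) 1"
  define K where "K = (- u x) powr p * unit_ball_vol DIM('a)"
  have K: "K > 0" unfolding K_def using c by simp
  define R where "R = T + (\<bar>CL\<bar> + 1) / K"
  have T1: "T \<ge> 1" unfolding T_def by simp
  have RT: "R \<ge> T" unfolding R_def using K by simp
  define S where "S = ball (0::'a) R - cball 0 T"
  have S: "S \<in> sets borel" unfolding S_def by simp
  have le: "- u x \<le> \<bar>u y\<bar>" if "y \<in> S" for y
  proof -
    have "norm x \<le> norm y" using that unfolding S_def T_def by auto
    then have "u y \<le> u x" by (rule nonincr)
    then show ?thesis using c by simp
  qed
  have mS: "emeasure lborel S = ennreal (unit_ball_vol DIM('a) * (R ^ DIM('a) - T ^ DIM('a)))"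
  proof -
    have "S = {y. T < norm y \<and> norm y < R}" unfolding S_def by auto
    then show ?thesis using T1 RT by (simp add: emeasure_annulus)
  qed
  have pd: "1 ^ (DIM('a) - 1) * (R - T) \<le> R ^ DIM('a) - T ^ DIM('a)"
    using T1 RT by (intro power_diff_ge) (auto simp: DIM_positive Suc_leI)
  have "ennreal ((- u x) powr p) * emeasure lborel S \<le> ennreal CL"
    using order_trans[OF Lr_pow_ge_on_set[OF S less_imp_le[OF c] le p] Lp] .
  then have "ennreal ((- u x) powr p * (unit_ball_vol DIM('a) * (R ^ DIM('a) - T ^ DIM('a)))) \<le> ennreal CL"
    unfolding mS by (subst ennreal_mult') auto
  moreover have "(- u x) powr p * (unit_ball_vol DIM('a) * (R ^ DIM('a) - T ^ DIM('a))) \<ge> K * (R - T)"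
    unfolding K_def using pd c by (simp add: mult.assoc mult_left_mono)
  moreover have "K * (R - T) = \<bar>CL\<bar> + 1" unfolding R_def using K by simp
  ultimately have "ennreal (\<bar>CL\<bar> + 1) \<le> ennreal CL"
    using order_trans[OF ennreal_leI] by metis
  then show False
    by (cases "CL \<ge> 0") (auto simp: ennreal_le_iff2)
qed

lemma le_of_Lr_pow_bounded:
  fixes u :: "'a::euclidean_space \<Rightarrow> real"
  assumes nonincr: "\<And>x y. norm x \<le> norm y \<Longrightarrow> u y \<le> u x"
    and Lp: "Lr_pow p u \<le> ennreal CL" and p: "p > 0" and CL: "CL \<ge> 0" and x: "x \<noteq> 0"
  shows "u x \<le> (CL / (unit_ball_vol DIM('a) * norm x ^ DIM('a))) powr (1 / p)"
proof -
  have u0: "u x \<ge> 0" by (rule nonneg_if_Lr_pow_bounded[OF nonincr Lp p])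
  define S where "S = cball (0::'a) (norm x)"
  have S: "S \<in> sets borel" unfolding S_def by simp
  have le: "u x \<le> \<bar>u y\<bar>" if "y \<in> S" for y
  proof -
    have "norm y \<le> norm x" using that unfolding S_def by auto
    then have "u x \<le> u y" by (rule nonincr)
    then show ?thesis by simp
  qed
  have "ennreal (u x powr p) * emeasure lborel S \<le> ennreal CL"
    using Lr_pow_ge_on_set[OF S u0 le p] Lp by (rule order_trans)
  then have "ennreal (u x powr p * (unit_ball_vol DIM('a) * norm x ^ DIM('a))) \<le> ennreal CL"
    unfolding S_def by (subst ennreal_mult') (auto simp: emeasure_cball)
  then have le2: "u x powr p * (unit_ball_vol DIM('a) * norm x ^ DIM('a)) \<le> CL"
    using CL by (simp add: ennreal_le_iff)
  have pos: "unit_ball_vol DIM('a) * norm x ^ DIM('a) > 0" using x by simp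
  then have "u x powr p \<le> CL / (unit_ball_vol DIM('a) * norm x ^ DIM('a))"
    using le2 by (simp add: field_simps)
  then have "(u x powr p) powr (1 / p) \<le> (CL / (unit_ball_vol DIM('a) * norm x ^ DIM('a))) powr (1 / p)"
    using p u0 by (intro powr_mono2) auto
  then show ?thesis using p u0 by (simp add: powr_powr)
qed

lemma drop_on_dyadic_interval_le_powr:
  fixes u :: "'a::euclidean_space \<Rightarrow> real"
  assumes e: "norm e = 1" and nonincr: "\<And>x y. norm x \<le> norm y \<Longrightarrow> u y \<le> u x"
    and p: "1 < p" "p < real DIM('a)" and \<delta>: "0 < \<delta>" "\<delta> \<le> \<delta>m"
    and I: "I_delta p \<delta> u \<le> ennreal CI" and CI: "CI \<ge> 0" and a: "0 < a" "a \<le> 1"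
  shows "u (a *\<^sub>R e) - u ((2 * a) *\<^sub>R e)
    \<le> (6 * \<delta>m + 3 * (2 * 4 powr (p - 1) * CI / (kernel_const p TYPE('a) * unit_ball_vol DIM('a))) powr (1 / p))
      * a powr (- ((real DIM('a) - p) / p))"
proof -
  define Q where "Q = 2 * 4 powr (p - 1) * CI / (kernel_const p TYPE('a) * unit_ball_vol DIM('a))"
  define \<gamma> where "\<gamma> = (real DIM('a) - p) / p"
  have "\<gamma> > 0" unfolding \<gamma>_def using p by simp
  have "(Q * a powr (p - DIM('a))) powr (1 / p) = Q powr (1 / p) * (a powr (p - DIM('a))) powr (1 / p)"
    by (rule powr_mult)
  also have "(a powr (p - DIM('a))) powr (1 / p) = a powr (- \<gamma>)"
  proof -
    have "(p - real DIM('a)) * (1 / p) = - \<gamma>" unfolding \<gamma>_def using p by (simp add: field_simps)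
    then show ?thesis by (simp only: powr_powr)
  qed
  finally have "(Q * a powr (p - DIM('a))) powr (1 / p) = Q powr (1 / p) * a powr (- \<gamma>)" .
  moreover have "1 \<le> a powr (- \<gamma>)"
    using powr_mono2'[of "- \<gamma>" a 1] a \<open>\<gamma> > 0\<close> by simp
  then have "6 * \<delta>m * 1 \<le> 6 * \<delta>m * a powr (- \<gamma>)" using \<delta> by (intro mult_left_mono) auto
  then have "6 * \<delta> \<le> 6 * \<delta>m * a powr (- \<gamma>)" using \<delta> by linarith
  ultimately show ?thesis
    using drop_on_dyadic_interval_le[OF e nonincr a(1) p(1) \<delta>(1) I CI]
    unfolding Q_def[symmetric] \<gamma>_def[symmetric] by (simp add: distrib_right)
qed

lemma half_power_powr_neg:
  assumes "g \<ge> 0"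
  shows "((1/2::real) ^ n) powr (- g) = (2 powr g) ^ n"
proof -
  have "((1/2::real) ^ n) powr (- g) = ((1/2) powr real n) powr (- g)" by (simp add: powr_realpow)
  also have "\<dots> = (1/2) powr (- (real n * g))" by (simp add: powr_powr)
  also have "\<dots> = 2 powr (real n * g)" by (simp add: powr_minus_divide powr_divide)
  also have "\<dots> = (2 powr g) powr real n" by (simp add: powr_powr mult.commute)
  also have "\<dots> = (2 powr g) ^ n" by (simp add: powr_realpow)
  finally show ?thesis .
qed

text \<open>Summing the dyadic oscillation bounds from radius 1 inwards gives a geometric series.\<close>
lemma le_at_dyadic_radius:
  fixes u :: "'a::euclidean_space \<Rightarrow> real" and e :: 'a
  assumes e: "norm e = 1"
    and nonincr: "\<And>x y. norm x \<le> norm y \<Longrightarrow> u y \<le> u x"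
    and p: "1 < p" "p < real DIM('a)" and \<delta>: "0 < \<delta>" "\<delta> \<le> \<delta>m"
    and I: "I_delta p \<delta> u \<le> ennreal CI" and CI: "CI \<ge> 0"
    and Lp: "Lr_pow p u \<le> ennreal CL" and CL: "CL \<ge> 0"
  shows "u (((1/2) ^ k) *\<^sub>R e) \<le> (CL / unit_ball_vol DIM('a)) powr (1 / p)
     + (6 * \<delta>m + 3 * (2 * 4 powr (p - 1) * CI / (kernel_const p TYPE('a) * unit_ball_vol DIM('a))) powr (1 / p))
       * (2 powr ((real DIM('a) - p) / p)) / (2 powr ((real DIM('a) - p) / p) - 1)
       * (2 powr ((real DIM('a) - p) / p)) ^ k"
proof -
  define \<gamma> where "\<gamma> = (real DIM('a) - p) / p"
  define lam where "lam = 2 powr \<gamma>"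
  define K where "K = 6 * \<delta>m + 3 * (2 * 4 powr (p - 1) * CI / (kernel_const p TYPE('a) * unit_ball_vol DIM('a))) powr (1 / p)"
  define A where "A = (CL / unit_ball_vol DIM('a)) powr (1 / p)"
  have \<gamma>: "\<gamma> > 0" unfolding \<gamma>_def using p by simp
  then have "2 powr 0 < lam" unfolding lam_def by (intro powr_less_mono) auto
  then have lam: "lam > 1" by simp
  have K: "K \<ge> 0" unfolding K_def using \<delta> by simp
  have "u (((1/2) ^ k) *\<^sub>R e) \<le> A + K * lam / (lam - 1) * lam ^ k"
  proof (induction k)
    case 0
    have "u e \<le> (CL / (unit_ball_vol DIM('a) * norm e ^ DIM('a))) powr (1 / p)"
      using e p CL by (intro le_of_Lr_pow_bounded[OF nonincr Lp]) auto
    moreover have "0 \<le> K * lam / (lam - 1)" using K lam by simp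
    ultimately show ?case using e unfolding A_def by simp
  next
    case (Suc k)
    define a where "a = (1/2::real) ^ Suc k"
    have a: "0 < a" "a \<le> 1" unfolding a_def by (simp, rule power_le_one) auto
    have "u (a *\<^sub>R e) \<le> u ((2 * a) *\<^sub>R e) + K * a powr (- \<gamma>)"
      using drop_on_dyadic_interval_le_powr[OF e nonincr p \<delta> I CI a] unfolding K_def \<gamma>_def by simp
    also have "2 * a = (1/2) ^ k" unfolding a_def by simp
    also have "a powr (- \<gamma>) = lam ^ Suc k" unfolding a_def lam_def using \<gamma> by (intro half_power_powr_neg) simp
    finally have "u (a *\<^sub>R e) \<le> u (((1/2) ^ k) *\<^sub>R e) + K * lam ^ Suc k" .
    moreover have "K * lam / (lam - 1) * lam ^ k + K * lam ^ Suc k = K * lam / (lam - 1) * lam ^ Suc k"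
    proof -
      have h: "K * lam / (lam - 1) + K * lam = K * lam / (lam - 1) * lam"
        using lam by (simp add: divide_simps) (simp add: algebra_simps)
      have "K * lam / (lam - 1) * lam ^ k + K * lam ^ Suc k = (K * lam / (lam - 1) + K * lam) * lam ^ k"
        by (simp add: algebra_simps)
      also have "\<dots> = K * lam / (lam - 1) * lam ^ Suc k" unfolding h by simp
      finally show ?thesis .
    qed
    ultimately show ?case using Suc.IH unfolding a_def by linarith
  qed
  then show ?thesis unfolding A_def K_def lam_def \<gamma>_def .
qed

definition inner_shell :: "nat \<Rightarrow> 'a::euclidean_space set" where
  "inner_shell k = {x. (1/2) ^ Suc k < norm x \<and> norm x \<le> (1/2) ^ k}"

definition outer_shell :: "nat \<Rightarrow> 'a::euclidean_space set" where
  "outer_shell k = {x. 2 ^ k < norm x \<and> norm x \<le> 2 ^ Suc k}"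

definition shell_envelope :: "real \<Rightarrow> (nat \<Rightarrow> real) \<Rightarrow> (nat \<Rightarrow> real) \<Rightarrow> 'a::euclidean_space \<Rightarrow> ennreal" where
  "shell_envelope r bI bO x = (\<Sum>k. ennreal (bI k powr r) * indicator (inner_shell k) x) + (\<Sum>k. ennreal (bO k powr r) * indicator (outer_shell k) x)"

lemma inner_shell_measurable[measurable]: "inner_shell k \<in> sets borel" unfolding inner_shell_def by measurable
lemma outer_shell_measurable[measurable]: "outer_shell k \<in> sets borel" unfolding outer_shell_def by measurable

lemma shell_envelope_measurable[measurable]: "shell_envelope r bI bO \<in> borel_measurable borel"
  unfolding shell_envelope_def by measurable

lemma shells_cover:
  fixes x :: "'a::euclidean_space"
  assumes "x \<noteq> 0"
  shows "(\<exists>k. x \<in> inner_shell k) \<or> (\<exists>k. x \<in> outer_shell k)"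
proof (cases "norm x \<le> 1")
  case True
  have nx: "norm x > 0" using assms by simp
  obtain n where n: "(1/2::real) ^ n < norm x" using real_arch_pow_inv[OF nx, of "1/2"] by auto
  define k where "k = (LEAST n. (1/2::real) ^ Suc n < norm x)"
  have ex: "(1/2::real) ^ Suc n < norm x" using n by (rule le_less_trans[rotated]) (simp add: power_Suc)
  have k1: "(1/2::real) ^ Suc k < norm x" unfolding k_def by (rule LeastI) (rule ex)
  have k2: "norm x \<le> (1/2) ^ k"
  proof (cases k)
    case 0 then show ?thesis using True by simp
  next
    case (Suc j)
    have jk: "j < k" using Suc by simp
    have "\<not> (1/2::real) ^ Suc j < norm x" using not_less_Least[OF jk[unfolded k_def]] .
    then show ?thesis using Suc by simp
  qed
  show ?thesis using k1 k2 unfolding inner_shell_def by auto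
next
  case False
  obtain n where n: "norm x < (2::real) ^ n" using real_arch_pow[of 2 "norm x"] by auto
  define k where "k = (LEAST n. norm x \<le> (2::real) ^ Suc n)"
  have ex: "norm x \<le> (2::real) ^ Suc n" using n power_increasing[of n "Suc n" "2::real"] by linarith
  have k1: "norm x \<le> (2::real) ^ Suc k" unfolding k_def by (rule LeastI) (rule ex)
  have k2: "2 ^ k < norm x"
  proof (cases k)
    case 0 then show ?thesis using False by simp
  next
    case (Suc j)
    have jk: "j < k" using Suc by simp
    have "\<not> norm x \<le> (2::real) ^ Suc j" using not_less_Least[OF jk[unfolded k_def]] .
    then show ?thesis using Suc by simp
  qed
  show ?thesis using k1 k2 unfolding outer_shell_def by auto
qed

lemma shell_envelope_ge:
  fixes v :: "'a::euclidean_space \<Rightarrow> real"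
  assumes "x \<noteq> 0" and r: "r > 0"
    and inner: "\<And>k. x \<in> inner_shell k \<Longrightarrow> \<bar>v x\<bar> \<le> bI k"
    and outer: "\<And>k. x \<in> outer_shell k \<Longrightarrow> \<bar>v x\<bar> \<le> bO k"
  shows "ennreal (\<bar>v x\<bar> powr r) \<le> shell_envelope r bI bO x"
proof -
  have term_le: "f k \<le> (\<Sum>k. f k)" for f :: "nat \<Rightarrow> ennreal" and k
    using sum_le_suminf[OF summableI, of "{k}" f] by simp
  from shells_cover[OF \<open>x \<noteq> 0\<close>] show ?thesis
  proof (elim disjE exE)
    fix k assume k: "x \<in> inner_shell k"
    then have "ennreal (\<bar>v x\<bar> powr r) \<le> ennreal (bI k powr r) * indicator (inner_shell k) x"
      using inner[OF k] r by (auto intro!: ennreal_leI powr_mono2)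
    also have "\<dots> \<le> (\<Sum>k. ennreal (bI k powr r) * indicator (inner_shell k) x)" by (rule term_le)
    also have "\<dots> \<le> shell_envelope r bI bO x" unfolding shell_envelope_def by simp
    finally show ?thesis .
  next
    fix k assume k: "x \<in> outer_shell k"
    then have "ennreal (\<bar>v x\<bar> powr r) \<le> ennreal (bO k powr r) * indicator (outer_shell k) x"
      using outer[OF k] r by (auto intro!: ennreal_leI powr_mono2)
    also have "\<dots> \<le> (\<Sum>k. ennreal (bO k powr r) * indicator (outer_shell k) x)" by (rule term_le)
    also have "\<dots> \<le> shell_envelope r bI bO x" unfolding shell_envelope_def by simp
    finally show ?thesis .
  qed
qed

lemma nn_integral_shell_envelope_finite:
  assumes bI: "\<And>k. bI k \<ge> 0" and bO: "\<And>k. bO k \<ge> 0"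
    and sI: "summable (\<lambda>k. bI k powr r * (unit_ball_vol DIM('a) * ((1/2) ^ k) ^ DIM('a)))"
    and sO: "summable (\<lambda>k. bO k powr r * (unit_ball_vol DIM('a) * (2 ^ Suc k) ^ DIM('a)))"
  shows "(\<integral>\<^sup>+ x. shell_envelope r bI bO (x::'a::euclidean_space) \<partial>lborel) < \<infinity>"
proof -
  have mI: "emeasure lborel (inner_shell k :: 'a set) \<le> ennreal (unit_ball_vol DIM('a) * ((1/2) ^ k) ^ DIM('a))" for k
  proof -
    have "inner_shell k \<subseteq> cball (0::'a) ((1/2) ^ k)" unfolding inner_shell_def by auto
    then have "emeasure lborel (inner_shell k :: 'a set) \<le> emeasure lborel (cball (0::'a) ((1/2) ^ k))"
      by (intro emeasure_mono) auto
    then show ?thesis by (simp add: emeasure_cball)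
  qed
  have mO: "emeasure lborel (outer_shell k :: 'a set) \<le> ennreal (unit_ball_vol DIM('a) * (2 ^ Suc k) ^ DIM('a))" for k
  proof -
    have "outer_shell k \<subseteq> cball (0::'a) (2 ^ Suc k)" unfolding outer_shell_def by auto
    then have "emeasure lborel (outer_shell k :: 'a set) \<le> emeasure lborel (cball (0::'a) (2 ^ Suc k))"
      by (intro emeasure_mono) auto
    then show ?thesis by (simp add: emeasure_cball)
  qed
  have "(\<integral>\<^sup>+ x. shell_envelope r bI bO (x::'a) \<partial>lborel)
     = (\<Sum>k. ennreal (bI k powr r) * emeasure lborel (inner_shell k :: 'a set)) + (\<Sum>k. ennreal (bO k powr r) * emeasure lborel (outer_shell k :: 'a set))"
    unfolding shell_envelope_def by (simp add: nn_integral_add nn_integral_suminf nn_integral_cmult_indicator)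
  also have "\<dots> \<le> (\<Sum>k. ennreal (bI k powr r * (unit_ball_vol DIM('a) * ((1/2) ^ k) ^ DIM('a))))
       + (\<Sum>k. ennreal (bO k powr r * (unit_ball_vol DIM('a) * (2 ^ Suc k) ^ DIM('a))))"
  proof -
    have tI: "ennreal (bI k powr r) * emeasure lborel (inner_shell k :: 'a set) \<le> ennreal (bI k powr r * (unit_ball_vol DIM('a) * ((1/2) ^ k) ^ DIM('a)))" for k
      by (subst ennreal_mult'[OF powr_ge_zero]) (intro mult_left_mono mI, simp)
    have tO: "ennreal (bO k powr r) * emeasure lborel (outer_shell k :: 'a set) \<le> ennreal (bO k powr r * (unit_ball_vol DIM('a) * (2 ^ Suc k) ^ DIM('a)))" for k
      by (subst ennreal_mult'[OF powr_ge_zero]) (intro mult_left_mono mO, simp)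
    show ?thesis by (intro add_mono suminf_le tI tO summableI)
  qed
  also have "\<dots> = ennreal (\<Sum>k. bI k powr r * (unit_ball_vol DIM('a) * ((1/2) ^ k) ^ DIM('a)))
       + ennreal (\<Sum>k. bO k powr r * (unit_ball_vol DIM('a) * (2 ^ Suc k) ^ DIM('a)))"
    using sI sO by (simp add: suminf_ennreal2)
  also have "\<dots> < \<infinity>" by (simp add: ennreal_plus[symmetric] del: ennreal_plus)
  finally show ?thesis .
qed

lemma summable_inner_shell_bounds:
  fixes E lam r :: real
  assumes E: "E \<ge> 0" and lam: "lam > 0" and q: "lam powr r * (1/2) ^ DIM('a::euclidean_space) < 1"
  shows "summable (\<lambda>k. (E * lam ^ Suc k) powr r * (unit_ball_vol DIM('a) * ((1/2) ^ k) ^ DIM('a)))"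
proof -
  have eq: "(E * lam ^ Suc k) powr r * (unit_ball_vol DIM('a) * ((1/2) ^ k) ^ DIM('a))
     = ((E * lam) powr r * unit_ball_vol DIM('a)) * (lam powr r * (1/2) ^ DIM('a)) ^ k" for k
  proof -
    have "(E * lam ^ Suc k) powr r = (E * lam) powr r * (lam powr r) ^ k"
      using E lam by (simp add: powr_mult mult.assoc power_powr_commute)
    moreover have "((1/2::real) ^ k) ^ DIM('a) = ((1/2) ^ DIM('a)) ^ k" by (simp add: power_mult[symmetric] mult.commute)
    ultimately show ?thesis by (simp add: power_mult_distrib)
  qed
  have "summable (\<lambda>k. ((E * lam) powr r * unit_ball_vol DIM('a)) * (lam powr r * (1/2) ^ DIM('a)) ^ k)"
    using q by (intro summable_mult summable_geometric) simp
  then show ?thesis unfolding eq .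
qed

lemma summable_outer_shell_bounds:
  fixes B mu r :: real
  assumes B: "B \<ge> 0" and mu: "mu > 0" and q: "mu powr r * 2 ^ DIM('a::euclidean_space) < 1"
  shows "summable (\<lambda>k. (B * mu ^ k) powr r * (unit_ball_vol DIM('a) * (2 ^ Suc k) ^ DIM('a)))"
proof -
  have eq: "(B * mu ^ k) powr r * (unit_ball_vol DIM('a) * (2 ^ Suc k) ^ DIM('a))
     = (B powr r * unit_ball_vol DIM('a) * 2 ^ DIM('a)) * (mu powr r * 2 ^ DIM('a)) ^ k" for k
  proof -
    have "(B * mu ^ k) powr r = B powr r * (mu powr r) ^ k"
      using B mu by (simp add: powr_mult power_powr_commute)
    moreover have "((2::real) ^ Suc k) ^ DIM('a) = 2 ^ DIM('a) * (2 ^ DIM('a)) ^ k"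
      by (simp add: power_mult[symmetric] power_add[symmetric] mult.commute)
    ultimately show ?thesis by (simp add: power_mult_distrib)
  qed
  have "summable (\<lambda>k. (B powr r * unit_ball_vol DIM('a) * 2 ^ DIM('a)) * (mu powr r * 2 ^ DIM('a)) ^ k)"
    using q mu by (intro summable_mult summable_geometric) simp
  then show ?thesis unfolding eq .
qed

lemma Lr_pow_bound_on_outer_shell:
  fixes CL w p t :: real
  assumes CL: "CL \<ge> 0" and w: "w > 0" and p: "p > 0" and t: "2 ^ k < t" and N: "N \<ge> 1"
  shows "(CL / (w * t ^ N)) powr (1 / p) \<le> (CL / w) powr (1 / p) * (2 powr (- real N / p)) ^ k"
proof -
  have tp: "t > 0" using t by (smt (verit) zero_less_power)
  have "(2::real) ^ k \<le> t" using t by simp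
  then have "((2::real) ^ k) ^ N \<le> t ^ N" by (intro power_mono) auto
  then have "CL / (w * t ^ N) \<le> CL / (w * ((2::real) ^ k) ^ N)"
    using CL w tp by (intro divide_left_mono mult_left_mono mult_pos_pos) auto
  then have "(CL / (w * t ^ N)) powr (1 / p) \<le> (CL / (w * ((2::real) ^ k) ^ N)) powr (1 / p)"
    using CL w tp p by (intro powr_mono2) auto
  also have "CL / (w * ((2::real) ^ k) ^ N) = (CL / w) * (2 powr (- real N)) ^ k"
  proof -
    have "((2::real) ^ k) ^ N = ((2::real) ^ N) ^ k" by (simp add: power_mult[symmetric] mult.commute)
    moreover have "(2 powr (- real N)) ^ k = 1 / ((2::real) ^ N) ^ k"
      by (simp add: powr_minus powr_realpow power_inverse divide_inverse)
    ultimately show ?thesis by simp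
  qed
  also have "((CL / w) * (2 powr (- real N)) ^ k) powr (1 / p) = (CL / w) powr (1 / p) * ((2 powr (- real N)) ^ k) powr (1 / p)"
    by (rule powr_mult)
  also have "((2 powr (- real N)) ^ k) powr (1 / p) = ((2 powr (- real N)) powr (1 / p)) ^ k"
    by (rule power_powr_commute) simp
  also have "(2 powr (- real N)) powr (1 / p) = 2 powr (- real N / p)" by (simp add: powr_powr)
  finally show ?thesis .
qed

text \<open>This is where the restriction \<open>p < r < N p / (N - p)\<close> enters: it makes the envelope
  summable over the dyadic shells both near the origin and near infinity.\<close>
lemma dyadic_shell_ratios_lt_one:
  fixes p r :: real and N :: nat
  assumes p: "1 < p" "p < real N" and r: "p < r" "r < real N * p / (real N - p)"
  shows "(2 powr ((real N - p) / p)) powr r * (1/2) ^ N < 1" "(2 powr (- real N / p)) powr r * 2 ^ N < 1"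
proof -
  have "(real N - p) / p * r < real N" using p r by (simp add: field_simps)
  moreover have "(2 powr ((real N - p) / p)) powr r * (1/2) ^ N = 2 powr ((real N - p) / p * r - real N)"
    by (simp add: powr_powr powr_diff powr_realpow power_one_over)
  ultimately show "(2 powr ((real N - p) / p)) powr r * (1/2) ^ N < 1"
    using powr_less_mono[of "(real N - p) / p * r - real N" 0 2] by simp
  have "real N < real N / p * r" using p r by (simp add: field_simps)
  moreover have "(2 powr (- real N / p)) powr r * 2 ^ N = 2 powr (real N - real N / p * r)"
  proof -
    have "(2 powr (- real N / p)) powr r = 2 powr (- real N / p * r)" by (simp add: powr_powr)
    moreover have "(2::real) ^ N = 2 powr real N" by (simp add: powr_realpow)
    ultimately show ?thesis by (simp add: powr_add[symmetric])
  qed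
  ultimately show "(2 powr (- real N / p)) powr r * 2 ^ N < 1"
    using powr_less_mono[of "real N - real N / p * r" 0 2] by simp
qed

lemma radial_Lr_envelope:
  fixes p r CL CI \<delta>m :: real
  assumes p: "1 < p" "p < real DIM('a)" and r: "p < r" "r < real DIM('a) * p / (real DIM('a) - p)"
    and CL: "CL \<ge> 0" and CI: "CI \<ge> 0" and \<delta>m: "\<delta>m \<ge> 0"
  obtains H :: "'a::euclidean_space \<Rightarrow> ennreal"
  where "H \<in> borel_measurable borel" "(\<integral>\<^sup>+ x. H x \<partial>lborel) < \<infinity>"
    "\<And>u \<delta> x. (\<And>x y. norm x \<le> norm y \<Longrightarrow> u y \<le> u x) \<Longrightarrow> 0 < \<delta> \<Longrightarrow> \<delta> \<le> \<delta>m \<Longrightarrow>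
      I_delta p \<delta> u \<le> ennreal CI \<Longrightarrow> Lr_pow p u \<le> ennreal CL \<Longrightarrow> x \<noteq> 0 \<Longrightarrow> ennreal (\<bar>u x\<bar> powr r) \<le> H x"
proof
  let ?N = "real DIM('a)" and ?w = "unit_ball_vol (real DIM('a))"
  obtain e :: 'a where e: "norm e = 1" using norm_Basis nonempty_Basis by blast
  define \<gamma> where "\<gamma> = (?N - p) / p"
  define lam where "lam = 2 powr \<gamma>"
  define A where "A = (CL / ?w) powr (1 / p)"
  define K where "K = (6 * \<delta>m + 3 * (2 * 4 powr (p - 1) * CI / (kernel_const p TYPE('a) * ?w)) powr (1 / p))
    * lam / (lam - 1)"
  define mu where "mu = 2 powr (- ?N / p)"
  define bI where "bI k = (A + K) * lam ^ Suc k" for k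
  define bO where "bO k = A * mu ^ k" for k
  have "2 powr 0 < 2 powr \<gamma>" unfolding \<gamma>_def using p by (intro powr_less_mono) auto
  then have lam: "lam > 1" unfolding lam_def by simp
  have A: "A \<ge> 0" and K: "K \<ge> 0" and mu: "mu > 0"
    unfolding A_def K_def mu_def using lam \<delta>m by auto
  show "(shell_envelope r bI bO :: 'a \<Rightarrow> ennreal) \<in> borel_measurable borel" by measurable
  note ratios = dyadic_shell_ratios_lt_one[OF p r, folded \<gamma>_def lam_def mu_def]
  show "(\<integral>\<^sup>+ x. shell_envelope r bI bO (x::'a) \<partial>lborel) < \<infinity>"
    unfolding bI_def bO_def using A K lam mu ratios
    by (intro nn_integral_shell_envelope_finite summable_inner_shell_bounds summable_outer_shell_bounds) auto
  fix u :: "'a \<Rightarrow> real" and \<delta> :: real and x :: 'a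
  assume nonincr: "\<And>x y. norm x \<le> norm y \<Longrightarrow> u y \<le> u x" and \<delta>: "0 < \<delta>" "\<delta> \<le> \<delta>m"
    and I: "I_delta p \<delta> u \<le> ennreal CI" and Lp: "Lr_pow p u \<le> ennreal CL" and "x \<noteq> 0"
  have p0: "p > 0" using p by simp
  have u0: "u y \<ge> 0" for y by (rule nonneg_if_Lr_pow_bounded[OF nonincr Lp p0])
  show "ennreal (\<bar>u x\<bar> powr r) \<le> shell_envelope r bI bO x"
  proof (rule shell_envelope_ge[OF \<open>x \<noteq> 0\<close>])
    fix k assume x: "x \<in> inner_shell k"
    then have "u x \<le> u (((1/2) ^ Suc k) *\<^sub>R e)" using e by (intro nonincr) (simp add: inner_shell_def)
    also have "\<dots> \<le> A + K * lam ^ Suc k"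
      unfolding A_def K_def lam_def \<gamma>_def by (rule le_at_dyadic_radius[OF e nonincr p \<delta> I CI Lp CL])
    also have "\<dots> \<le> bI k"
      using A lam one_le_power[of lam "Suc k"] unfolding bI_def by (simp add: distrib_right mult_le_cancel_left1)
    finally show "\<bar>u x\<bar> \<le> bI k" using u0[of x] by simp
  next
    fix k assume x: "x \<in> outer_shell k"
    then have "x \<noteq> 0" by (auto simp: outer_shell_def)
    with nonincr Lp p0 CL have "u x \<le> (CL / (?w * norm x ^ DIM('a))) powr (1 / p)"
      by (rule le_of_Lr_pow_bounded)
    also have "\<dots> \<le> bO k"
      unfolding bO_def A_def mu_def using x p CL
      by (intro Lr_pow_bound_on_outer_shell) (auto simp: outer_shell_def DIM_positive Suc_leI)
    finally show "\<bar>u x\<bar> \<le> bO k" using u0[of x] by simp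
  qed (use p r in auto)
qed

lemma radial_nonincr_borel_measurable:
  fixes u :: "'a::euclidean_space \<Rightarrow> real" and e :: 'a
  assumes e: "norm e = 1" and nonincr: "\<And>x y. norm x \<le> norm y \<Longrightarrow> u y \<le> u x"
  shows "u \<in> borel_measurable borel"
proof -
  have "mono (\<lambda>t. - u (max t 0 *\<^sub>R e))"
    using e by (intro monoI) (auto intro!: nonincr)
  then have [measurable]: "(\<lambda>t. - u (max t 0 *\<^sub>R e)) \<in> borel_measurable borel"
    by (rule borel_measurable_mono)
  have "u x = - (- u (max (norm x) 0 *\<^sub>R e))" for x
    using nonincr[of x "norm x *\<^sub>R e"] nonincr[of "norm x *\<^sub>R e" x] e by simp
  then have "u = (\<lambda>x. - (- u (max (norm x) 0 *\<^sub>R e)))" by (rule ext)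
  also have "\<dots> \<in> borel_measurable borel" by measurable
  finally show ?thesis .
qed

lemma radial_nonincr_convergent_subseq:
  fixes u :: "nat \<Rightarrow> 'a::euclidean_space \<Rightarrow> real" and M :: "real \<Rightarrow> real"
  assumes nonincr: "\<And>n x y. norm x \<le> norm y \<Longrightarrow> u n y \<le> u n x"
    and bdd: "\<And>n x. x \<noteq> 0 \<Longrightarrow> \<bar>u n x\<bar> \<le> M (norm x)"
  obtains \<sigma> where "strict_mono \<sigma>" "AE x in lborel. convergent (\<lambda>k. u (\<sigma> k) x)"
proof -
  obtain e :: 'a where e: "norm e = 1" using norm_Basis nonempty_Basis by blast
  define f where "f n t = - u n (exp t *\<^sub>R e)" for n t
  have "mono (f n)" for n
    unfolding f_def using e by (intro monoI) (auto intro!: nonincr)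
  moreover have "\<bar>f n t\<bar> \<le> M (exp t)" for n t
  proof -
    have "exp t *\<^sub>R e \<noteq> 0" using e by auto
    then show ?thesis unfolding f_def using bdd[of "exp t *\<^sub>R e" n] e by simp
  qed
  ultimately obtain \<sigma> D where \<sigma>: "strict_mono \<sigma>" and "countable D"
    and conv: "\<And>t. t \<notin> D \<Longrightarrow> convergent (\<lambda>n. f (\<sigma> n) t)"
    using Helly_selection_off_countable[of f "\<lambda>t. M (exp t)"] by blast
  define Z where "Z = {0} \<union> (\<Union>d\<in>D. sphere (0::'a) (exp d))"
  have "Z \<in> null_sets lborel"
    unfolding Z_def using \<open>countable D\<close> by (intro null_sets.Un null_sets_UN' null_sets_sphere) auto
  moreover have "convergent (\<lambda>k. u (\<sigma> k) x)" if "x \<notin> Z" for x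
  proof -
    have x: "x \<noteq> 0" "ln (norm x) \<notin> D" using that unfolding Z_def by auto
    have "f n (ln (norm x)) = - u n x" for n
      unfolding f_def using x e nonincr[of x "norm x *\<^sub>R e" n] nonincr[of "norm x *\<^sub>R e" x n]
      by (simp add: order_antisym)
    then show ?thesis using convergent_minus_iff conv[OF x(2)] by fastforce
  qed
  ultimately have "AE x in lborel. convergent (\<lambda>k. u (\<sigma> k) x)" by (auto intro: AE_I')
  with \<sigma> that show ?thesis by blast
qed

lemma Lr_pow_diff_tendsto_zero:
  fixes v :: "nat \<Rightarrow> 'a::euclidean_space \<Rightarrow> real" and H :: "'a \<Rightarrow> ennreal"
  assumes r: "r > 0"
    and [measurable]: "\<And>k. v k \<in> borel_measurable borel" "g \<in> borel_measurable borel" "H \<in> borel_measurable borel"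
    and H_fin: "(\<integral>\<^sup>+ x. H x \<partial>lborel) < \<infinity>"
    and dom: "\<And>k. AE x in lborel. ennreal (\<bar>v k x\<bar> powr r) \<le> H x"
    and g_dom: "AE x in lborel. ennreal (\<bar>g x\<bar> powr r) \<le> H x"
    and lim: "AE x in lborel. (\<lambda>k. v k x) \<longlonglongrightarrow> g x"
  shows "(\<lambda>k. Lr_pow r (\<lambda>x. v k x - g x)) \<longlonglongrightarrow> 0"
proof -
  define w where "w x = ennreal (2 powr r) * (H x + H x)" for x
  have "(\<lambda>k. \<integral>\<^sup>+ x. ennreal (\<bar>v k x - g x\<bar> powr r) \<partial>lborel) \<longlonglongrightarrow> (\<integral>\<^sup>+ (x::'a). 0 \<partial>lborel)"
  proof (rule nn_integral_dominated_convergence[where u = "\<lambda>k x. ennreal (\<bar>v k x - g x\<bar> powr r)"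
        and u' = "\<lambda>x. 0" and w = w])
    show "(\<integral>\<^sup>+ x. w x \<partial>lborel) < \<infinity>"
      unfolding w_def using H_fin by (simp add: nn_integral_cmult nn_integral_add ennreal_mult_less_top)
    show "AE x in lborel. ennreal (\<bar>v k x - g x\<bar> powr r) \<le> w x" for k
      using dom[of k] g_dom
    proof eventually_elim
      case (elim x)
      have "ennreal (\<bar>v k x - g x\<bar> powr r) \<le> ennreal (2 powr r * (\<bar>v k x\<bar> powr r + \<bar>g x\<bar> powr r))"
        using r by (intro ennreal_leI powr_abs_diff_le) simp
      also have "\<dots> = ennreal (2 powr r) * (ennreal (\<bar>v k x\<bar> powr r) + ennreal (\<bar>g x\<bar> powr r))"
        by (simp add: ennreal_mult ennreal_plus)
      also have "\<dots> \<le> w x" unfolding w_def using elim by (intro mult_left_mono add_mono) auto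
      finally show ?case .
    qed
    show "AE x in lborel. (\<lambda>k. ennreal (\<bar>v k x - g x\<bar> powr r)) \<longlonglongrightarrow> 0"
      using lim
    proof eventually_elim
      case (elim x)
      then have "(\<lambda>k. \<bar>v k x - g x\<bar>) \<longlonglongrightarrow> 0" by (simp add: LIM_zero tendsto_rabs_zero)
      then have "(\<lambda>k. \<bar>v k x - g x\<bar> powr r) \<longlonglongrightarrow> 0" using r by (intro tendsto_zero_powrI) auto
      then show ?case by (simp add: tendsto_ennrealI[where x=0, simplified])
    qed
    show "w \<in> borel_measurable lborel" unfolding w_def by measurable
  qed measurable
  then show ?thesis unfolding Lr_pow_def by simp
qed

lemma precompact_Lr_if_radial_dominated:
  fixes u :: "nat \<Rightarrow> 'a::euclidean_space \<Rightarrow> real" and H :: "'a \<Rightarrow> ennreal"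
  assumes r: "r > 0" and meas: "\<And>n. u n \<in> borel_measurable lebesgue"
    and nonincr: "\<And>n x y. norm x \<le> norm y \<Longrightarrow> u n y \<le> u n x"
    and H [measurable]: "H \<in> borel_measurable borel" and H_fin: "(\<integral>\<^sup>+ x. H x \<partial>lborel) < \<infinity>"
    and dom: "\<And>n x. x \<noteq> 0 \<Longrightarrow> ennreal (\<bar>u n x\<bar> powr r) \<le> H x"
  shows "precompact_Lr r u"
proof -
  obtain e :: 'a where e: "norm e = 1" using norm_Basis nonempty_Basis by blast
  have u_meas [measurable]: "u n \<in> borel_measurable borel" for n
    by (rule radial_nonincr_borel_measurable[OF e nonincr])
  have dom_ae: "AE x in lborel. ennreal (\<bar>u n x\<bar> powr r) \<le> H x" for n
    using AE_lborel_singleton[of 0] by eventually_elim (rule dom)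
  define CH where "CH = enn2real (\<integral>\<^sup>+ x. H x \<partial>lborel)"
  have CH: "CH \<ge> 0" "(\<integral>\<^sup>+ x. H x \<partial>lborel) = ennreal CH"
    unfolding CH_def using H_fin by (auto simp: less_top)
  have Lr_le: "Lr_pow r (u n) \<le> ennreal CH" for n
    unfolding Lr_pow_def CH(2)[symmetric] by (rule nn_integral_mono_AE[OF dom_ae])
  have "\<forall>n. u n \<in> borel_measurable lebesgue \<and> Lr_pow r (u n) < \<infinity>"
    using meas Lr_le by (auto intro: le_less_trans[OF _ ennreal_less_top])
  moreover have "\<exists>t g. strict_mono t \<and> g \<in> borel_measurable lebesgue \<and> Lr_pow r g < \<infinity> \<and>
      ((\<lambda>k. Lr_pow r (\<lambda>x. u (s (t k)) x - g x)) \<longlongrightarrow> 0) sequentially" for s :: "nat \<Rightarrow> nat"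
  proof -
    define M where "M t = (CH / (unit_ball_vol DIM('a) * t ^ DIM('a))) powr (1 / r)" for t
    have bound: "\<bar>u (s n) x\<bar> \<le> M (norm x)" if "x \<noteq> 0" for n x
    proof -
      have "0 \<le> u (s n) x" by (rule nonneg_if_Lr_pow_bounded[OF nonincr Lr_le r])
      then show ?thesis using le_of_Lr_pow_bounded[OF nonincr Lr_le r CH(1) that] unfolding M_def by simp
    qed
    obtain \<sigma> where \<sigma>: "strict_mono \<sigma>" and conv: "AE x in lborel. convergent (\<lambda>k. u (s (\<sigma> k)) x)"
      by (rule radial_nonincr_convergent_subseq[of "\<lambda>n. u (s n)" M]) (auto intro: nonincr bound)
    define g where "g x = lim (\<lambda>k. u (s (\<sigma> k)) x)" for x
    have g_meas [measurable]: "g \<in> borel_measurable borel" unfolding g_def by measurable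
    have lim: "AE x in lborel. (\<lambda>k. u (s (\<sigma> k)) x) \<longlonglongrightarrow> g x"
      using conv by eventually_elim (simp add: g_def convergent_LIMSEQ_iff)
    have g_dom: "AE x in lborel. ennreal (\<bar>g x\<bar> powr r) \<le> H x"
      using lim AE_lborel_singleton[of 0]
    proof eventually_elim
      case (elim x)
      have "(\<lambda>k. ennreal (\<bar>u (s (\<sigma> k)) x\<bar> powr r)) \<longlonglongrightarrow> ennreal (\<bar>g x\<bar> powr r)"
        using r by (intro tendsto_ennrealI tendsto_powr' tendsto_rabs elim(1)) auto
      then show ?case by (rule LIMSEQ_le_const2) (use dom[OF elim(2)] in blast)
    qed
    then have "Lr_pow r g < \<infinity>"
      unfolding Lr_pow_def using H_fin by (blast intro: le_less_trans nn_integral_mono_AE)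
    moreover have "(\<lambda>k. Lr_pow r (\<lambda>x. u (s (\<sigma> k)) x - g x)) \<longlonglongrightarrow> 0"
      by (rule Lr_pow_diff_tendsto_zero[OF r _ _ H H_fin dom_ae g_dom lim]) measurable
    moreover have "g \<in> borel_measurable lebesgue"
      by (rule measurable_completion) simp
    ultimately show ?thesis using \<sigma> by blast
  qed
  ultimately show ?thesis unfolding precompact_Lr_def by blast
qed

theorem theorem3p3:
  fixes p :: real and \<delta> :: "nat \<Rightarrow> real" and u :: "nat \<Rightarrow> 'a::euclidean_space \<Rightarrow> real"
  assumes p: "1 < p" "p < real DIM('a)"
    and \<delta>_pos: "\<And>n. \<delta> n > 0"
    and \<delta>_lim: "\<delta> \<longlonglongrightarrow> 0"
    and meas: "\<And>n. u n \<in> borel_measurable lebesgue"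
    and radial: "\<And>n x y. norm x = norm y \<Longrightarrow> u n x = u n y"
    and nonincr: "\<And>n x y. norm x \<le> norm y \<Longrightarrow> u n y \<le> u n x"
    and Lp_bdd: "\<exists>C. \<forall>n. Lr_pow p (u n) \<le> ennreal C"
    and I_bdd: "\<exists>C. \<forall>n. I_delta p (\<delta> n) (u n) \<le> ennreal C"
  shows "\<forall>r. p < r \<and> r < real DIM('a) * p / (real DIM('a) - p) \<longrightarrow> precompact_Lr r u"
proof (intro allI impI)
  \<comment> \<open>\<open>radial\<close> follows from \<open>nonincr\<close>, and of \<open>\<delta>_lim\<close> only the boundedness of \<open>\<delta>\<close> is used.\<close>
  fix r assume r: "p < r \<and> r < real DIM('a) * p / (real DIM('a) - p)"
  have nonneg_bound: "\<exists>C\<ge>0. \<forall>n. X n \<le> ennreal C" if "\<exists>C. \<forall>n. X n \<le> ennreal C" for X :: "nat \<Rightarrow> ennreal"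
    using that by (metis ennreal_eq_0_iff max.cobounded1 max.cobounded2 ennreal_le_iff2 order_trans ennreal_leI)
  obtain CL where "CL \<ge> 0" "\<And>n. Lr_pow p (u n) \<le> ennreal CL" using nonneg_bound[OF Lp_bdd] by blast
  moreover obtain CI where "CI \<ge> 0" "\<And>n. I_delta p (\<delta> n) (u n) \<le> ennreal CI" using nonneg_bound[OF I_bdd] by blast
  moreover obtain \<delta>m where "\<And>n. \<delta> n \<le> \<delta>m"
  proof -
    have "Bseq \<delta>" using \<delta>_lim by (intro convergent_imp_Bseq) (auto simp: convergent_def)
    then show ?thesis using that by (metis BseqE abs_le_D1 real_norm_def)
  qed
  moreover have "\<delta>m \<ge> 0" using \<open>\<And>n. \<delta> n \<le> \<delta>m\<close>[of 0] \<delta>_pos[of 0] by simp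
  ultimately obtain H :: "'a \<Rightarrow> ennreal" where "H \<in> borel_measurable borel" "(\<integral>\<^sup>+ x. H x \<partial>lborel) < \<infinity>"
    "\<And>n x. x \<noteq> 0 \<Longrightarrow> ennreal (\<bar>u n x\<bar> powr r) \<le> H x"
    using radial_Lr_envelope[OF p _ _ \<open>CL \<ge> 0\<close> \<open>CI \<ge> 0\<close> \<open>\<delta>m \<ge> 0\<close>] r nonincr \<delta>_pos by metis
  with r p meas nonincr show "precompact_Lr r u"
    by (intro precompact_Lr_if_radial_dominated) auto
qed

end
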